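(* Let $\overline{\mathsf{HAL}}$ be the symmetric function defined below. Then $$\operatorname{Comm}\circ\Sigma\operatorname{PreLie}=p_1-\bigl(p_1\,\partial_{p_1}\overline{\mathsf{HAL}}-\overline{\mathsf{HAL}}\bigr).$$
   Context: Symmetric functions are formal power series in the power sums $p_1,p_2,\dots$ over $\mathbb{Q}$; $\partial_{p_1}$ is the partial derivative in $p_1$. Plethysm: $p_k\circ f$ replaces each $p_j$ in $f$ by $p_{jk}$ (rational constants fixed), and $g\circ f$ substitutes $p_k\circ f$ for $p_k$ in $g$. Suspension: $\Sigma f=-f(-p_1,-p_2,\dots)$. $\operatorname{Comm}=\exp(\sum_{k\ge1}p_k/k)-1$; $\operatorname{Lie}=\sum_{k\ge1}\frac{\mu(k)}{k}(-\ln(1-p_k))$ ($\mu$ number-theoretic Möbius function). $\operatorname{PreLie}$ is the Frobenius characteristic of the permutation representations of $\mathfrak{S}_n$ on rooted trees with vertex set $\{1,\dots,n\}$, equivalently the unique solution without constant term of $\operatorname{PreLie}=p_1(1+\operatorname{Comm}\circ\operatorname{PreLie})$. The symmetric functions $\overline{\mathsf{HAL}}^{pa},\overline{\mathsf{HAL}}^{p},\overline{\mathsf{HAL}}^{a},\overline{\mathsf{HAL}}$ are uniquely determined by $\overline{\mathsf{HAL}}^{pa}=p_1\cdot([p_1/(1+p_1)]\circ\operatorname{Comm}\circ[p_1-\overline{\mathsf{HAL}}^{pa}])$, $\overline{\mathsf{HAL}}^{p}=p_1\cdot([\Sigma\operatorname{Lie}]\circ\operatorname{Comm}\circ[p_1-\overline{\mathsf{HAL}}^{pa}])$,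 $\overline{\mathsf{HAL}}^{a}=[\operatorname{Comm}-p_1]\circ[p_1-\overline{\mathsf{HAL}}^{pa}]$, and $\overline{\mathsf{HAL}}=\overline{\mathsf{HAL}}^{p}+\overline{\mathsf{HAL}}^{a}-\overline{\mathsf{HAL}}^{pa}$. *)

theory Defs
  imports Complex_Main "HOL-Library.Multiset" "HOL-Computational_Algebra.Squarefree"
          "HOL-Computational_Algebra.Primes"
begin

text \<open>Symmetric functions over the rationals, as formal power series in the power sums.
  A monomial p_(i1+1) * ... * p_(ir+1) is encoded by the multiset {#i1,...,ir#} of naturals
  (the element i stands for the power sum p_(i+1)); a symmetric function is its
  coefficient function.\<close>

type_synonym sf = "nat multiset \<Rightarrow> rat"

definition sf_deg :: "nat multiset \<Rightarrow> nat" where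
  "sf_deg l = sum_mset (image_mset Suc l)"

definition sf_one :: sf where
  "sf_one = (\<lambda>l. if l = {#} then 1 else 0)"

text \<open>the power sum p_k (for k >= 1)\<close>
definition pvar :: "nat \<Rightarrow> sf" where
  "pvar k = (\<lambda>l. if l = {#k - 1#} then 1 else 0)"

definition sf_add :: "sf \<Rightarrow> sf \<Rightarrow> sf" where
  "sf_add f g = (\<lambda>l. f l + g l)"

definition sf_sub :: "sf \<Rightarrow> sf \<Rightarrow> sf" where
  "sf_sub f g = (\<lambda>l. f l - g l)"

definition sf_smult :: "rat \<Rightarrow> sf \<Rightarrow> sf" where
  "sf_smult c f = (\<lambda>l. c * f l)"

definition sf_mult :: "sf \<Rightarrow> sf \<Rightarrow> sf" where
  "sf_mult f g = (\<lambda>l. \<Sum>m\<in>{m. m \<subseteq># l}. f m * g (l - m))"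

primrec sf_pow :: "sf \<Rightarrow> nat \<Rightarrow> sf" where
  "sf_pow h 0 = sf_one"
| "sf_pow h (Suc n) = sf_mult h (sf_pow h n)"

definition sf_prod_list :: "sf list \<Rightarrow> sf" where
  "sf_prod_list xs = foldr sf_mult xs sf_one"

text \<open>Substitution of a series h without constant term into a univariate power series
  with coefficients a: sum over n of a n * h^n (coefficientwise a finite sum).\<close>
definition psubst :: "(nat \<Rightarrow> rat) \<Rightarrow> sf \<Rightarrow> sf" where
  "psubst a h = (\<lambda>l. \<Sum>n\<in>{..sf_deg l}. a n * sf_pow h n l)"

definition sf_exp :: "sf \<Rightarrow> sf" where
  "sf_exp h = psubst (\<lambda>n. 1 / fact n) h"

definition sf_mlog :: "sf \<Rightarrow> sf" where
  "sf_mlog h = psubst (\<lambda>n. if n = 0 then 0 else 1 / of_nat n) h"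

text \<open>Sum over k >= 1 of F k, for families where F k has no terms of degree < k.\<close>
definition sf_series :: "(nat \<Rightarrow> sf) \<Rightarrow> sf" where
  "sf_series F = (\<lambda>l. \<Sum>k\<in>{1..sf_deg l}. F k l)"

text \<open>Plethysm p_k o f: replace each p_j by p_(jk).\<close>
definition pleth_pk :: "nat \<Rightarrow> sf \<Rightarrow> sf" where
  "pleth_pk k f = (\<lambda>l. if (\<forall>i\<in>#l. k dvd Suc i)
                        then f (image_mset (\<lambda>i. Suc i div k - 1) l) else 0)"

definition pleth_mono :: "nat multiset \<Rightarrow> sf \<Rightarrow> sf" where
  "pleth_mono l f = sf_prod_list (map (\<lambda>i. pleth_pk (Suc i) f) (sorted_list_of_multiset l))"

text \<open>Plethysm g o f (for f without constant term).\<close>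
definition sf_comp :: "sf \<Rightarrow> sf \<Rightarrow> sf" where
  "sf_comp g f = (\<lambda>l. \<Sum>m\<in>{m. sf_deg m \<le> sf_deg l}. g m * pleth_mono m f l)"

text \<open>Suspension: Sigma f = - f(-p1,-p2,...)\<close>
definition susp :: "sf \<Rightarrow> sf" where
  "susp f = (\<lambda>l. - ((-1) ^ size l * f l))"

definition dp1 :: "sf \<Rightarrow> sf" where
  "dp1 f = (\<lambda>l. of_nat (count l 0 + 1) * f (add_mset 0 l))"

definition moebius :: "nat \<Rightarrow> rat" where
  "moebius n = (if squarefree n then (-1) ^ card (prime_factors n) else 0)"

definition Comm :: sf where
  "Comm = sf_sub (sf_exp (sf_series (\<lambda>k. sf_smult (1 / of_nat k) (pvar k)))) sf_one"

definition Lie :: sf where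
  "Lie = sf_series (\<lambda>k. sf_smult (moebius k / of_nat k) (sf_mlog (pvar k)))"

definition p1_over_1_plus_p1 :: sf where
  "p1_over_1_plus_p1 = psubst (\<lambda>n. if n = 0 then 0 else (-1) ^ (n - 1)) (pvar 1)"

end

theory Submission
  imports Defs "HOL-Computational_Algebra.Formal_Power_Series"
begin

text \<open>Write Y = p_1 - HALpa. The defining equation of HALpa says Y (1 + Comm o Y) = p_1, and
  applying the sign twist to the equation of PreLie shows that Sigma PreLie solves the same
  equation; since its solution is unique, Comm o Sigma PreLie = Comm o Y. Because
  1 + Comm o y = exp (sum_k (p_k o y)/k), Moebius inversion gives (Sigma Lie) o (Comm o Y) = Y,
  so HAL = p_1 Y + Comm o Y - p_1. Differentiating Y (1 + Comm o Y) = p_1 with respect to p_1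
  finally yields d HAL/d p_1 = Y, and the identity follows.\<close>

unbundle fps_syntax

declare One_nat_def [simp del]

section \<open>The ring of symmetric functions\<close>

lemma sf_deg_empty [simp]: "sf_deg {#} = 0"
  by (simp add: sf_deg_def)

lemma sf_deg_add_mset [simp]: "sf_deg (add_mset i l) = Suc i + sf_deg l"
  by (simp add: sf_deg_def)

lemma sf_deg_plus [simp]: "sf_deg (a + b) = sf_deg a + sf_deg b"
  by (simp add: sf_deg_def)

lemma sf_deg_eq_0_iff [simp]: "sf_deg l = 0 \<longleftrightarrow> l = {#}"
  by (induction l) auto

lemma size_le_sf_deg: "size l \<le> sf_deg l"
  by (induction l) auto

lemma less_sf_deg_if_in: "i \<in># l \<Longrightarrow> i < sf_deg l"
  by (induction l) auto

lemma sf_deg_mono: "a \<subseteq># b \<Longrightarrow> sf_deg a \<le> sf_deg b"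
  by (metis le_add1 sf_deg_plus subset_mset.add_diff_inverse)

lemma finite_sf_deg_le: "finite {m. sf_deg m \<le> n}"
proof (rule finite_subset)
  show "{m. sf_deg m \<le> n} \<subseteq> (\<Union>s\<in>{..n}. multisets_of_size {..<n} s)"
  proof
    fix m assume "m \<in> {m. sf_deg m \<le> n}"
    hence "size m \<le> n" "set_mset m \<subseteq> {..<n}"
      using size_le_sf_deg[of m] less_sf_deg_if_in[of _ m] by fastforce+
    thus "m \<in> (\<Union>s\<in>{..n}. multisets_of_size {..<n} s)"
      by (auto simp: multisets_of_size_def)
  qed
qed auto

lemma finite_msubsets: "finite {m. m \<subseteq># (l :: nat multiset)}"
  by (rule finite_subset[OF _ finite_sf_deg_le[of "sf_deg l"]]) (auto intro: sf_deg_mono)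

definition msplits :: "nat multiset \<Rightarrow> (nat multiset \<times> nat multiset) set" where
  "msplits l = {(a, b). a + b = l}"

lemma finite_msplits [simp]: "finite (msplits l)"
proof -
  have "msplits l = (\<lambda>m. (m, l - m)) ` {m. m \<subseteq># l}"
    by (auto simp: msplits_def image_iff)
  thus ?thesis using finite_msubsets by simp
qed

lemma sf_mult_msplits: "sf_mult f g l = (\<Sum>(a, b)\<in>msplits l. f a * g b)"
  unfolding sf_mult_def
  by (rule sum.reindex_bij_witness[where i = fst and j = "\<lambda>m. (m, l - m)"])
     (auto simp: msplits_def)

lemma sum_msplits_swap:
  "(\<Sum>q\<in>msplits l. F (fst q) (snd q)) = (\<Sum>q\<in>msplits l. F (snd q) (fst q))"
  by (rule sum.reindex_bij_witness[where i = "\<lambda>q. (snd q, fst q)" and j = "\<lambda>q. (snd q, fst q)"])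
     (auto simp: msplits_def add.commute)

definition msplits3 :: "nat multiset \<Rightarrow> (nat multiset \<times> nat multiset \<times> nat multiset) set" where
  "msplits3 l = {(a, b, c). a + b + c = l}"

lemma sum_msplits_msplits_right:
  "(\<Sum>(a, x)\<in>msplits l. \<Sum>(b, c)\<in>msplits x. F a b c) = (\<Sum>(a, b, c)\<in>msplits3 l. F a b c)"
proof -
  have "(\<Sum>(a, x)\<in>msplits l. \<Sum>(b, c)\<in>msplits x. F a b c)
      = (\<Sum>(p, q)\<in>Sigma (msplits l) (\<lambda>p. msplits (snd p)). F (fst p) (fst q) (snd q))"
    by (subst sum.Sigma[symmetric]) (auto simp: split_beta)
  also have "\<dots> = (\<Sum>(a, b, c)\<in>msplits3 l. F a b c)"
    by (rule sum.reindex_bij_witness[where j = "\<lambda>((a, x), (b, c)). (a, b, c)"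
          and i = "\<lambda>(a, b, c). ((a, b + c), (b, c))"])
       (auto simp: msplits_def msplits3_def add.assoc)
  finally show ?thesis .
qed

lemma sum_msplits_msplits_left:
  "(\<Sum>(x, c)\<in>msplits l. \<Sum>(a, b)\<in>msplits x. F a b c) = (\<Sum>(a, b, c)\<in>msplits3 l. F a b c)"
proof -
  have "(\<Sum>(x, c)\<in>msplits l. \<Sum>(a, b)\<in>msplits x. F a b c)
      = (\<Sum>(p, q)\<in>Sigma (msplits l) (\<lambda>p. msplits (fst p)). F (fst q) (snd q) (snd p))"
    by (subst sum.Sigma[symmetric]) (auto simp: split_beta)
  also have "\<dots> = (\<Sum>(a, b, c)\<in>msplits3 l. F a b c)"
    by (rule sum.reindex_bij_witness[where j = "\<lambda>((x, c), (a, b)). (a, b, c)"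
          and i = "\<lambda>(a, b, c). ((a + b, c), (a, b))"])
       (auto simp: msplits_def msplits3_def add.assoc)
  finally show ?thesis .
qed

lemma sf_mult_assoc: "sf_mult (sf_mult f g) h = sf_mult f (sf_mult g h)"
proof
  fix l
  have "sf_mult (sf_mult f g) h l = (\<Sum>(x, c)\<in>msplits l. \<Sum>(a, b)\<in>msplits x. f a * g b * h c)"
    by (simp add: sf_mult_msplits sum_distrib_right split_beta)
  also have "\<dots> = (\<Sum>(a, x)\<in>msplits l. \<Sum>(b, c)\<in>msplits x. f a * g b * h c)"
    unfolding sum_msplits_msplits_left sum_msplits_msplits_right ..
  also have "\<dots> = sf_mult f (sf_mult g h) l"
    by (simp add: sf_mult_msplits sum_distrib_left split_beta mult.assoc)
  finally show "sf_mult (sf_mult f g) h l = sf_mult f (sf_mult g h) l" .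
qed

lemma sf_mult_commute: "sf_mult f g = sf_mult g f"
  using sum_msplits_swap[of "\<lambda>a b. f a * g b"]
  by (simp add: fun_eq_iff sf_mult_msplits split_beta mult.commute)

lemma sf_mult_one_left: "sf_mult sf_one g = g"
proof
  fix l
  have "sf_mult sf_one g l = (\<Sum>m\<in>{m. m \<subseteq># l}. if m = {#} then g l else 0)"
    unfolding sf_mult_def sf_one_def by (intro sum.cong) auto
  also have "\<dots> = g l" by (simp add: finite_msubsets)
  finally show "sf_mult sf_one g l = g l" .
qed

typedef symfun = "UNIV :: sf set" morphisms sf_nth Abs_sf by simp

setup_lifting type_definition_symfun

instantiation symfun :: comm_ring_1
begin

lift_definition zero_symfun :: symfun is "\<lambda>l. 0" .
lift_definition one_symfun :: symfun is sf_one .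
lift_definition plus_symfun :: "symfun \<Rightarrow> symfun \<Rightarrow> symfun" is sf_add .
lift_definition minus_symfun :: "symfun \<Rightarrow> symfun \<Rightarrow> symfun" is sf_sub .
lift_definition uminus_symfun :: "symfun \<Rightarrow> symfun" is "\<lambda>f l. - f l" .
lift_definition times_symfun :: "symfun \<Rightarrow> symfun \<Rightarrow> symfun" is sf_mult .

instance
proof
  fix a b c :: symfun
  show "a * b * c = a * (b * c)" by transfer (rule sf_mult_assoc)
  show "a * b = b * a" by transfer (rule sf_mult_commute)
  show "1 * a = a" by transfer (rule sf_mult_one_left)
  show "a + b + c = a + (b + c)" by transfer (simp add: sf_add_def add.assoc)
  show "a + b = b + a" by transfer (simp add: sf_add_def add.commute)
  show "0 + a = a" by transfer (simp add: sf_add_def)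
  show "- a + a = 0" by transfer (simp add: sf_add_def)
  show "a - b = a + - b" by transfer (simp add: sf_add_def sf_sub_def)
  show "(a + b) * c = a * c + b * c"
    by transfer (simp add: sf_add_def sf_mult_def sum.distrib algebra_simps)
  show "(0::symfun) \<noteq> 1" by transfer (simp add: sf_one_def fun_eq_iff)
qed

end

lemma symfun_eqI: "(\<And>l. sf_nth x l = sf_nth y l) \<Longrightarrow> x = y"
  by (metis sf_nth_inject ext)

lemma sf_nth_Abs_sf [simp]: "sf_nth (Abs_sf f) = f"
  by (simp add: Abs_sf_inverse)

lemma sf_nth_zero [simp]: "sf_nth 0 l = 0"
  by transfer simp

lemma sf_nth_one: "sf_nth 1 = sf_one"
  by transfer simp

lemma sf_nth_one_empty [simp]: "sf_nth 1 {#} = 1"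
  by (simp add: sf_nth_one sf_one_def)

lemma sf_nth_one_nonempty [simp]: "l \<noteq> {#} \<Longrightarrow> sf_nth 1 l = 0"
  by (simp add: sf_nth_one sf_one_def)

lemma sf_nth_add [simp]: "sf_nth (x + y) l = sf_nth x l + sf_nth y l"
  by transfer (simp add: sf_add_def)

lemma sf_nth_diff [simp]: "sf_nth (x - y) l = sf_nth x l - sf_nth y l"
  by transfer (simp add: sf_sub_def)

lemma sf_nth_uminus [simp]: "sf_nth (- x) l = - sf_nth x l"
  by transfer simp

lemma sf_nth_mult: "sf_nth (x * y) = sf_mult (sf_nth x) (sf_nth y)"
  by transfer simp

lemma sf_nth_mult_msplits: "sf_nth (x * y) l = (\<Sum>(a, b)\<in>msplits l. sf_nth x a * sf_nth y b)"
  by (simp add: sf_nth_mult sf_mult_msplits)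

lemma sf_nth_sum [simp]: "sf_nth (sum f A) l = (\<Sum>i\<in>A. sf_nth (f i) l)"
  by (induction A rule: infinite_finite_induct) auto

lemma sf_nth_power: "sf_nth (x ^ n) = sf_pow (sf_nth x) n"
  by (induction n) (auto simp: sf_nth_one sf_nth_mult)

lemma Abs_sf_sf_add: "Abs_sf (sf_add f g) = Abs_sf f + Abs_sf g"
  by (rule symfun_eqI) (simp add: sf_add_def)

lemma Abs_sf_sf_sub: "Abs_sf (sf_sub f g) = Abs_sf f - Abs_sf g"
  by (rule symfun_eqI) (simp add: sf_sub_def)

lemma Abs_sf_sf_mult: "Abs_sf (sf_mult f g) = Abs_sf f * Abs_sf g"
  by (rule symfun_eqI) (simp add: sf_nth_mult)

lemma Abs_sf_sf_one: "Abs_sf sf_one = 1"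
  by (rule symfun_eqI) (simp add: sf_nth_one)

section \<open>Order of vanishing\<close>

definition vanishes_below :: "nat \<Rightarrow> symfun \<Rightarrow> bool" where
  "vanishes_below n x \<longleftrightarrow> (\<forall>l. sf_deg l < n \<longrightarrow> sf_nth x l = 0)"

lemma vanishes_belowI: "(\<And>l. sf_deg l < n \<Longrightarrow> sf_nth x l = 0) \<Longrightarrow> vanishes_below n x"
  by (auto simp: vanishes_below_def)

lemma vanishes_belowD: "vanishes_below n x \<Longrightarrow> sf_deg l < n \<Longrightarrow> sf_nth x l = 0"
  by (auto simp: vanishes_below_def)

lemma vanishes_below_1_iff: "vanishes_below 1 x \<longleftrightarrow> sf_nth x {#} = 0"
  by (auto simp: vanishes_below_def)

lemma vanishes_below_0 [simp]: "vanishes_below 0 x"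
  by (auto simp: vanishes_below_def)

lemma vanishes_below_zero [simp]: "vanishes_below n 0"
  by (auto simp: vanishes_below_def)

lemma vanishes_below_mono: "vanishes_below n x \<Longrightarrow> m \<le> n \<Longrightarrow> vanishes_below m x"
  by (auto simp: vanishes_below_def)

lemma vanishes_below_add: "vanishes_below n x \<Longrightarrow> vanishes_below n y \<Longrightarrow> vanishes_below n (x + y)"
  by (auto simp: vanishes_below_def)

lemma vanishes_below_diff: "vanishes_below n x \<Longrightarrow> vanishes_below n y \<Longrightarrow> vanishes_below n (x - y)"
  by (auto simp: vanishes_below_def)

lemma vanishes_below_uminus_iff [simp]: "vanishes_below n (- x) \<longleftrightarrow> vanishes_below n x"
  by (auto simp: vanishes_below_def)

lemma vanishes_below_sum:
  "(\<And>i. i \<in> A \<Longrightarrow> vanishes_below n (f i)) \<Longrightarrow> vanishes_below n (sum f A)"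
  by (induction A rule: infinite_finite_induct) (auto intro: vanishes_below_add)

lemma vanishes_below_mult:
  assumes x: "vanishes_below a x" and y: "vanishes_below b y"
  shows "vanishes_below (a + b) (x * y)"
proof (rule vanishes_belowI)
  fix l assume l: "sf_deg l < a + b"
  have "sf_nth x c * sf_nth y d = 0" if "(c, d) \<in> msplits l" for c d
  proof -
    have "sf_deg c < a \<or> sf_deg d < b" using l that by (auto simp: msplits_def)
    thus ?thesis using x y by (auto simp: vanishes_below_def)
  qed
  thus "sf_nth (x * y) l = 0"
    unfolding sf_nth_mult_msplits by (intro sum.neutral) auto
qed

lemma vanishes_below_mult_left: "vanishes_below a x \<Longrightarrow> vanishes_below a (x * y)"
  using vanishes_below_mult[of a x 0 y] by simp

lemma vanishes_below_mult_right: "vanishes_below a y \<Longrightarrow> vanishes_below a (x * y)"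
  using vanishes_below_mult[of 0 x a y] by simp

lemma vanishes_below_power: "vanishes_below k x \<Longrightarrow> vanishes_below (k * n) (x ^ n)"
proof (induction n)
  case (Suc n)
  hence "vanishes_below (k + k * n) (x * x ^ n)" by (intro vanishes_below_mult)
  thus ?case by simp
qed simp

lemma vanishes_below_power_diff:
  "vanishes_below n (a - b) \<Longrightarrow> vanishes_below n (a ^ m - b ^ m)"
proof (induction m)
  case (Suc m)
  have "a ^ Suc m - b ^ Suc m = a * (a ^ m - b ^ m) + (a - b) * b ^ m"
    by (simp add: algebra_simps)
  thus ?case
    using Suc by (simp add: vanishes_below_add vanishes_below_mult_left vanishes_below_mult_right)
qed simp

lemma symfun_eqI_vanishes_below:
  assumes "\<And>n. vanishes_below n (x - y)"
  shows "x = y"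
proof (rule symfun_eqI)
  fix l
  have "sf_nth (x - y) l = 0" by (rule vanishes_belowD[OF assms[of "Suc (sf_deg l)"]]) simp
  thus "sf_nth x l = sf_nth y l" by simp
qed

lemma symfun_eqI_approx:
  assumes "\<And>N. \<exists>a. vanishes_below (Suc N) (x - a) \<and> vanishes_below (Suc N) (y - a)"
  shows "x = y"
proof (rule symfun_eqI_vanishes_below)
  fix n
  obtain a where "vanishes_below (Suc n) (x - a)" "vanishes_below (Suc n) (y - a)"
    using assms by blast
  moreover have "(x - a) - (y - a) = x - y" by simp
  ultimately have "vanishes_below (Suc n) (x - y)" by (metis vanishes_below_diff)
  thus "vanishes_below n (x - y)" by (rule vanishes_below_mono) simp
qed

section \<open>Scalars and substitution into formal power series\<close>

definition sf_const :: "rat \<Rightarrow> symfun" where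
  "sf_const c = Abs_sf (sf_smult c sf_one)"

lemma sf_nth_const: "sf_nth (sf_const c) l = (if l = {#} then c else 0)"
  by (simp add: sf_const_def sf_smult_def sf_one_def)

lemma sf_nth_const_mult [simp]: "sf_nth (sf_const c * x) l = c * sf_nth x l"
proof -
  have "({#}, l) \<in> msplits l" by (simp add: msplits_def)
  have "sf_nth (sf_const c * x) l = (\<Sum>p\<in>msplits l. if p = ({#}, l) then c * sf_nth x l else 0)"
    unfolding sf_nth_mult_msplits
    by (intro sum.cong) (auto simp: sf_nth_const msplits_def split: if_splits)
  also have "\<dots> = c * sf_nth x l" using \<open>({#}, l) \<in> msplits l\<close> by simp
  finally show ?thesis .
qed

lemma sf_const_1 [simp]: "sf_const 1 = 1"
  by (rule symfun_eqI) (simp add: sf_nth_const sf_nth_one sf_one_def)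

lemma sf_const_add: "sf_const (a + b) = sf_const a + sf_const b"
  by (rule symfun_eqI) (simp add: sf_nth_const)

lemma sf_const_mult: "sf_const (a * b) = sf_const a * sf_const b"
  by (rule symfun_eqI) (simp add: sf_nth_const)

lemma sf_const_sum: "sf_const (sum f A) = (\<Sum>i\<in>A. sf_const (f i))"
  by (induction A rule: infinite_finite_induct) (auto simp: sf_const_add sf_nth_const intro: symfun_eqI)

lemma Abs_sf_sf_smult: "Abs_sf (sf_smult c f) = sf_const c * Abs_sf f"
  by (rule symfun_eqI) (simp add: sf_smult_def)

lemma vanishes_below_const_mult: "vanishes_below n x \<Longrightarrow> vanishes_below n (sf_const c * x)"
  by (auto simp: vanishes_below_def)

lemma sf_nth_neg_one_power_mult: "sf_nth ((-1) ^ n * x) l = (-1) ^ n * sf_nth x l"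
  by (cases "even n") auto

text \<open>Only meaningful when u has no constant term: psubst stops at the degree of the coefficient.\<close>

definition fps_subst :: "rat fps \<Rightarrow> symfun \<Rightarrow> symfun" where
  "fps_subst A u = Abs_sf (psubst (fps_nth A) (sf_nth u))"

definition fps_subst_trunc :: "nat \<Rightarrow> rat fps \<Rightarrow> symfun \<Rightarrow> symfun" where
  "fps_subst_trunc N A u = (\<Sum>n\<le>N. sf_const (A $ n) * u ^ n)"

lemma sf_nth_fps_subst: "sf_nth (fps_subst A u) l = (\<Sum>n\<le>sf_deg l. A $ n * sf_nth (u ^ n) l)"
  by (simp add: fps_subst_def psubst_def sf_nth_power)

lemma Abs_sf_psubst: "Abs_sf (psubst a h) = fps_subst (Abs_fps a) (Abs_sf h)"
proof -
  have "fps_nth (Abs_fps a) = a" by (rule ext) simp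
  thus ?thesis by (simp add: fps_subst_def)
qed

lemma sf_nth_fps_subst_le:
  assumes "vanishes_below 1 u" "sf_deg l \<le> N"
  shows "sf_nth (fps_subst A u) l = (\<Sum>n\<le>N. A $ n * sf_nth (u ^ n) l)"
proof -
  have "(\<Sum>n\<le>N. A $ n * sf_nth (u ^ n) l) = (\<Sum>n\<le>sf_deg l. A $ n * sf_nth (u ^ n) l)"
  proof (rule sum.mono_neutral_right)
    show "\<forall>i\<in>{..N} - {..sf_deg l}. A $ i * sf_nth (u ^ i) l = 0"
      using vanishes_belowD[OF vanishes_below_power[OF assms(1)]] by auto
  qed (use assms in auto)
  thus ?thesis by (simp add: sf_nth_fps_subst)
qed

lemma fps_subst_trunc_approx:
  "vanishes_below 1 u \<Longrightarrow> vanishes_below (Suc N) (fps_subst A u - fps_subst_trunc N A u)"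
  by (rule vanishes_belowI) (simp add: sf_nth_fps_subst_le fps_subst_trunc_def)

lemma fps_subst_add: "fps_subst (A + B) u = fps_subst A u + fps_subst B u"
  by (rule symfun_eqI) (simp add: sf_nth_fps_subst algebra_simps sum.distrib)

lemma fps_subst_diff: "fps_subst (A - B) u = fps_subst A u - fps_subst B u"
  by (rule symfun_eqI) (simp add: sf_nth_fps_subst algebra_simps sum_subtractf)

lemma fps_subst_uminus: "fps_subst (- A) u = - fps_subst A u"
  by (rule symfun_eqI) (simp add: sf_nth_fps_subst sum_negf)

lemma fps_subst_const_mult: "fps_subst (fps_const c * A) u = sf_const c * fps_subst A u"
  by (rule symfun_eqI) (simp add: sf_nth_fps_subst sum_distrib_left mult.assoc)

lemma fps_subst_sum: "fps_subst (sum f I) u = (\<Sum>i\<in>I. fps_subst (f i) u)"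
proof (induction I rule: infinite_finite_induct)
  case (infinite I)
  thus ?case by (auto intro: symfun_eqI simp: sf_nth_fps_subst)
qed (auto intro: symfun_eqI simp: sf_nth_fps_subst fps_subst_add)

lemma fps_subst_one: "fps_subst 1 u = 1"
proof (rule symfun_eqI)
  fix l
  have "(\<Sum>n\<le>sf_deg l. (1::rat fps) $ n * sf_nth (u ^ n) l) =
        (\<Sum>n\<in>{0}. (1::rat fps) $ n * sf_nth (u ^ n) l)"
    by (rule sum.mono_neutral_right) auto
  thus "sf_nth (fps_subst 1 u) l = sf_nth 1 l" by (simp add: sf_nth_fps_subst)
qed

lemma fps_subst_X: "vanishes_below 1 u \<Longrightarrow> fps_subst fps_X u = u"
proof (rule symfun_eqI)
  fix l assume u: "vanishes_below 1 u"
  have "sf_nth (fps_subst fps_X u) l = (\<Sum>n\<le>Suc (sf_deg l). fps_X $ n * sf_nth (u ^ n) l)"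
    by (rule sf_nth_fps_subst_le[OF u]) simp
  also have "\<dots> = (\<Sum>n\<le>Suc (sf_deg l). if n = 1 then sf_nth (u ^ n) l else 0)"
    by (intro sum.cong) (auto simp: fps_X_nth)
  also have "\<dots> = sf_nth u l"
    using u by (cases "sf_deg l") (auto simp: vanishes_below_1_iff)
  finally show "sf_nth (fps_subst fps_X u) l = sf_nth u l" .
qed

lemma vanishes_below_fps_subst:
  assumes u: "vanishes_below k u" "1 \<le> k" and A: "A $ 0 = 0"
  shows "vanishes_below k (fps_subst A u)"
proof (rule vanishes_belowI)
  fix l assume l: "sf_deg l < k"
  have "A $ n * sf_nth (u ^ n) l = 0" for n
  proof (cases n)
    case (Suc m)
    have "sf_deg l < k * n" using l Suc by (simp add: less_le_trans)
    thus ?thesis by (simp add: vanishes_belowD[OF vanishes_below_power[OF u(1)]])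
  qed (simp add: A)
  thus "sf_nth (fps_subst A u) l = 0" unfolding sf_nth_fps_subst by (simp add: sum.neutral)
qed

lemma fps_subst_approx_coeffs:
  assumes "\<And>i. i \<le> N \<Longrightarrow> A $ i = B $ i"
  shows "vanishes_below (Suc N) (fps_subst A u - fps_subst B u)"
  by (rule vanishes_belowI) (simp add: sf_nth_fps_subst assms)

lemma fps_subst_trunc_mult:
  "fps_subst_trunc N A u * fps_subst_trunc N B u = fps_subst_trunc N (A * B) u +
     (\<Sum>p\<in>({..N} \<times> {..N}) - {(i, j). i + j \<le> N}.
        sf_const (A $ fst p * B $ snd p) * u ^ (fst p + snd p))"
proof -
  let ?t = "\<lambda>p. sf_const (A $ fst p * B $ snd p) * u ^ (fst p + snd p)"
  have sub: "{(i, j). i + j \<le> N} \<subseteq> {..N} \<times> {..N}" by auto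
  have "fps_subst_trunc N A u * fps_subst_trunc N B u = (\<Sum>p\<in>{..N} \<times> {..N}. ?t p)"
    unfolding fps_subst_trunc_def sum_product sum.cartesian_product
    by (intro sum.cong) (auto simp: sf_const_mult power_add algebra_simps)
  also have "\<dots> = (\<Sum>p\<in>({..N} \<times> {..N}) - {(i, j). i + j \<le> N}. ?t p)
                  + (\<Sum>p\<in>{(i, j). i + j \<le> N}. ?t p)"
    by (rule sum.subset_diff[OF sub]) simp
  also have "(\<Sum>p\<in>{(i, j). i + j \<le> N}. ?t p)
      = (\<Sum>k\<le>N. \<Sum>i\<le>k. sf_const (A $ i * B $ (k - i)) * u ^ (i + (k - i)))"
    using sum.triangle_reindex_eq[of "\<lambda>i j. sf_const (A $ i * B $ j) * u ^ (i + j)" N]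
    by (simp add: split_beta)
  also have "\<dots> = fps_subst_trunc N (A * B) u"
    unfolding fps_subst_trunc_def fps_mult_nth
    by (intro sum.cong refl) (auto simp: atLeast0AtMost sf_const_sum sum_distrib_right)
  finally show ?thesis by simp
qed

lemma fps_subst_mult:
  assumes u: "vanishes_below 1 u"
  shows "fps_subst (A * B) u = fps_subst A u * fps_subst B u"
proof (rule symfun_eqI_approx)
  fix N
  let ?T = "\<lambda>A. fps_subst_trunc N A u"
  let ?R = "\<Sum>p\<in>({..N} \<times> {..N}) - {(i, j). i + j \<le> N}.
              sf_const (A $ fst p * B $ snd p) * u ^ (fst p + snd p)"
  have R: "vanishes_below (Suc N) ?R"
  proof (rule vanishes_below_sum)
    fix p assume "p \<in> ({..N} \<times> {..N}) - {(i, j). i + j \<le> N}"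
    hence "Suc N \<le> fst p + snd p" by auto
    thus "vanishes_below (Suc N) (sf_const (A $ fst p * B $ snd p) * u ^ (fst p + snd p))"
      using vanishes_below_power[OF u] by (auto intro: vanishes_below_const_mult vanishes_below_mono)
  qed
  have "fps_subst A u * fps_subst B u - ?T (A * B) =
        (fps_subst A u - ?T A) * fps_subst B u + ?T A * (fps_subst B u - ?T B) + ?R"
    using fps_subst_trunc_mult[of N A u B] by (simp add: algebra_simps)
  hence "vanishes_below (Suc N) (fps_subst A u * fps_subst B u - ?T (A * B))"
    using R fps_subst_trunc_approx[OF u]
    by (simp add: vanishes_below_add vanishes_below_mult_left vanishes_below_mult_right)
  thus "\<exists>a. vanishes_below (Suc N) (fps_subst (A * B) u - a) \<and>
            vanishes_below (Suc N) (fps_subst A u * fps_subst B u - a)"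
    using fps_subst_trunc_approx[OF u] by blast
qed

lemma fps_subst_power: "vanishes_below 1 u \<Longrightarrow> fps_subst (A ^ n) u = fps_subst A u ^ n"
  by (induction n) (auto simp: fps_subst_one fps_subst_mult)

lemma fps_subst_uminus_arg: "fps_subst A (- u) = fps_subst (Abs_fps (\<lambda>n. (-1) ^ n * A $ n)) u"
proof (rule symfun_eqI)
  fix l
  have "sf_nth ((- u) ^ n) l = (-1) ^ n * sf_nth (u ^ n) l" for n
    by (simp only: power_minus[of u n] sf_nth_neg_one_power_mult)
  thus "sf_nth (fps_subst A (- u)) l = sf_nth (fps_subst (Abs_fps (\<lambda>n. (-1) ^ n * A $ n)) u) l"
    by (simp add: sf_nth_fps_subst mult_ac)
qed

lemma fps_subst_approx_arg:
  assumes a: "vanishes_below 1 a" and b: "vanishes_below 1 b" and ab: "vanishes_below n (a - b)"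
  shows "vanishes_below n (fps_subst A a - fps_subst A b)"
proof -
  let ?T = "fps_subst_trunc n A"
  have "?T a - ?T b = (\<Sum>i\<le>n. sf_const (A $ i) * (a ^ i - b ^ i))"
    by (simp add: fps_subst_trunc_def right_diff_distrib sum_subtractf)
  moreover have "vanishes_below n (\<Sum>i\<le>n. sf_const (A $ i) * (a ^ i - b ^ i))"
    by (intro vanishes_below_sum vanishes_below_const_mult vanishes_below_power_diff ab)
  ultimately have "vanishes_below n (?T a - ?T b)" by simp
  moreover have "vanishes_below n (fps_subst A a - ?T a)" "vanishes_below n (fps_subst A b - ?T b)"
    by (rule vanishes_below_mono[OF fps_subst_trunc_approx], fact, simp)+
  moreover have "fps_subst A a - fps_subst A b =
                   (fps_subst A a - ?T a) - (fps_subst A b - ?T b) + (?T a - ?T b)"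
    by simp
  ultimately show ?thesis by (simp only: vanishes_below_add vanishes_below_diff)
qed

lemma additive_map_diff:
  fixes \<phi> :: "'a :: ab_group_add \<Rightarrow> 'b :: ab_group_add"
  assumes "\<And>x y. \<phi> (x + y) = \<phi> x + \<phi> y"
  shows "\<phi> (x - y) = \<phi> x - \<phi> y"
  using assms[of "x - y" y] by (simp add: algebra_simps)

lemma additive_map_sum:
  fixes \<phi> :: "'a :: ab_group_add \<Rightarrow> 'b :: ab_group_add"
  assumes "\<And>x y. \<phi> (x + y) = \<phi> x + \<phi> y"
  shows "\<phi> (sum f I) = (\<Sum>i\<in>I. \<phi> (f i))"
proof -
  have "\<phi> 0 = 0" using assms[of 0 0] by simp
  thus ?thesis by (induction I rule: infinite_finite_induct) (auto simp: assms)
qed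

lemma fps_subst_commute:
  fixes \<phi> :: "symfun \<Rightarrow> symfun"
  assumes add: "\<And>x y. \<phi> (x + y) = \<phi> x + \<phi> y"
    and mult: "\<And>x y. \<phi> (x * y) = \<phi> x * \<phi> y"
    and one: "\<phi> 1 = 1" and const: "\<And>c. \<phi> (sf_const c) = sf_const c"
    and cont: "\<And>n x. vanishes_below n x \<Longrightarrow> vanishes_below n (\<phi> x)"
    and u: "vanishes_below 1 u"
  shows "\<phi> (fps_subst A u) = fps_subst A (\<phi> u)"
proof (rule symfun_eqI_approx)
  fix N
  have "\<phi> (x ^ n) = \<phi> x ^ n" for x n
    by (induction n) (auto simp: one mult)
  hence "\<phi> (fps_subst_trunc N A u) = fps_subst_trunc N A (\<phi> u)"
    by (simp add: fps_subst_trunc_def additive_map_sum[OF add] mult const)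
  hence "vanishes_below (Suc N) (\<phi> (fps_subst A u) - fps_subst_trunc N A (\<phi> u))"
    using cont[OF fps_subst_trunc_approx[OF u, of N A]] by (simp add: additive_map_diff[OF add])
  thus "\<exists>a. vanishes_below (Suc N) (\<phi> (fps_subst A u) - a) \<and>
            vanishes_below (Suc N) (fps_subst A (\<phi> u) - a)"
    using fps_subst_trunc_approx[OF cont[OF u]] by blast
qed

lemma fps_subst_compose:
  assumes v: "vanishes_below 1 v" and B0: "B $ 0 = 0"
  shows "fps_subst A (fps_subst B v) = fps_subst (A oo B) v"
proof (rule symfun_eqI_approx)
  fix N
  let ?a = "fps_subst (\<Sum>n\<le>N. fps_const (A $ n) * B ^ n) v"
  have w: "vanishes_below 1 (fps_subst B v)" by (rule vanishes_below_fps_subst[OF v order_refl B0])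
  have "fps_subst_trunc N A (fps_subst B v) = ?a"
    by (simp add: fps_subst_trunc_def fps_subst_sum fps_subst_const_mult fps_subst_power[OF v])
  hence "vanishes_below (Suc N) (fps_subst A (fps_subst B v) - ?a)"
    using fps_subst_trunc_approx[OF w, of N A] by simp
  moreover have "vanishes_below (Suc N) (fps_subst (A oo B) v - ?a)"
  proof (rule fps_subst_approx_coeffs)
    fix i assume i: "i \<le> N"
    have "(A oo B) $ i = (\<Sum>n\<in>{0..i}. A $ n * (B ^ n $ i))" by (rule fps_compose_nth)
    also have "\<dots> = (\<Sum>n\<le>N. A $ n * (B ^ n $ i))"
      by (rule sum.mono_neutral_left) (use i startsby_zero_power_prefix[OF B0] in auto)
    also have "\<dots> = (\<Sum>n\<le>N. fps_const (A $ n) * B ^ n) $ i"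
      by (simp add: fps_sum_nth)
    finally show "(A oo B) $ i = (\<Sum>n\<le>N. fps_const (A $ n) * B ^ n) $ i" .
  qed
  ultimately show "\<exists>a. vanishes_below (Suc N) (fps_subst A (fps_subst B v) - a) \<and>
                       vanishes_below (Suc N) (fps_subst (A oo B) v - a)"
    by blast
qed

section \<open>Graded sums\<close>

text \<open>Coefficientwise only finitely many k contribute, so this is the infinite sum of the F k
  (k \<ge> 1) only when each F k vanishes below degree k.\<close>

definition graded_sum :: "(nat \<Rightarrow> symfun) \<Rightarrow> symfun" where
  "graded_sum F = Abs_sf (sf_series (\<lambda>k. sf_nth (F k)))"

lemma sf_nth_graded_sum: "sf_nth (graded_sum F) l = (\<Sum>k\<in>{1..sf_deg l}. sf_nth (F k) l)"
  by (simp add: graded_sum_def sf_series_def)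

lemma Abs_sf_sf_series: "Abs_sf (sf_series F) = graded_sum (\<lambda>k. Abs_sf (F k))"
  by (simp add: graded_sum_def)

lemma graded_sum_approx:
  assumes "\<And>k. vanishes_below k (F k)"
  shows "vanishes_below (Suc N) (graded_sum F - (\<Sum>k\<in>{1..N}. F k))"
proof (rule vanishes_belowI)
  fix l assume l: "sf_deg l < Suc N"
  have "(\<Sum>k\<in>{1..N}. sf_nth (F k) l) = (\<Sum>k\<in>{1..sf_deg l}. sf_nth (F k) l)"
    by (rule sum.mono_neutral_right) (use l in \<open>auto intro: vanishes_belowD[OF assms]\<close>)
  thus "sf_nth (graded_sum F - (\<Sum>k\<in>{1..N}. F k)) l = 0" by (simp add: sf_nth_graded_sum)
qed

lemma graded_sum_commute:
  fixes \<phi> :: "symfun \<Rightarrow> symfun"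
  assumes add: "\<And>x y. \<phi> (x + y) = \<phi> x + \<phi> y"
    and cont: "\<And>n x. vanishes_below n x \<Longrightarrow> vanishes_below n (\<phi> x)"
    and F: "\<And>k. vanishes_below k (F k)"
  shows "\<phi> (graded_sum F) = graded_sum (\<lambda>k. \<phi> (F k))"
proof (rule symfun_eqI_approx)
  fix N
  have "vanishes_below (Suc N) (\<phi> (graded_sum F) - (\<Sum>k\<in>{1..N}. \<phi> (F k)))"
    using cont[OF graded_sum_approx[OF F, of N]]
    by (simp add: additive_map_diff[OF add] additive_map_sum[OF add])
  moreover have "vanishes_below (Suc N) (graded_sum (\<lambda>k. \<phi> (F k)) - (\<Sum>k\<in>{1..N}. \<phi> (F k)))"
    by (rule graded_sum_approx) (rule cont[OF F])
  ultimately show "\<exists>a. vanishes_below (Suc N) (\<phi> (graded_sum F) - a) \<and>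
                       vanishes_below (Suc N) (graded_sum (\<lambda>k. \<phi> (F k)) - a)"
    by blast
qed

lemma graded_sum_cong: "(\<And>k. 0 < k \<Longrightarrow> F k = G k) \<Longrightarrow> graded_sum F = graded_sum G"
  by (rule symfun_eqI) (simp add: sf_nth_graded_sum)

lemma vanishes_below_graded_sum:
  "(\<And>k. 0 < k \<Longrightarrow> vanishes_below n (F k)) \<Longrightarrow> vanishes_below n (graded_sum F)"
  by (rule vanishes_belowI) (auto simp: sf_nth_graded_sum intro!: sum.neutral vanishes_belowD)

lemma vanishes_below_1_graded_sum: "vanishes_below 1 (graded_sum F)"
  by (rule vanishes_belowI) (simp add: sf_nth_graded_sum)

lemma graded_sum_uminus: "graded_sum (\<lambda>k. - F k) = - graded_sum F"
  by (rule symfun_eqI) (simp add: sf_nth_graded_sum sum_negf)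

lemma graded_sum_diff: "graded_sum (\<lambda>k. F k - G k) = graded_sum F - graded_sum G"
  by (rule symfun_eqI) (simp add: sf_nth_graded_sum sum_subtractf)

section \<open>Adams operations\<close>

text \<open>The element i of a multiset stands for a part i + 1, so multiplying all parts by k sends
  i to k (i + 1) - 1.\<close>

definition scale_parts :: "nat \<Rightarrow> nat multiset \<Rightarrow> nat multiset" where
  "scale_parts k l = image_mset (\<lambda>i. k * Suc i - 1) l"

lemma scale_parts_empty [simp]: "scale_parts k {#} = {#}"
  by (simp add: scale_parts_def)

lemma scale_parts_plus [simp]: "scale_parts k (a + b) = scale_parts k a + scale_parts k b"
  by (simp add: scale_parts_def)

lemma scale_parts_1 [simp]: "scale_parts 1 l = l"
  by (simp add: scale_parts_def)

lemma scale_parts_eq_empty_iff [simp]: "scale_parts k l = {#} \<longleftrightarrow> l = {#}"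
  by (simp add: scale_parts_def)

lemma Suc_mult_Suc_minus_1: "0 < k \<Longrightarrow> Suc (k * Suc i - 1) = k * Suc i"
  by simp

lemma sf_deg_scale_parts: assumes "0 < k" shows "sf_deg (scale_parts k l) = k * sf_deg l"
proof -
  have "image_mset Suc (scale_parts k l) = image_mset (\<lambda>i. k * Suc i) l"
    using assms by (simp add: scale_parts_def image_mset.compositionality comp_def
        Suc_mult_Suc_minus_1 del: mult_Suc_right)
  thus ?thesis by (simp add: sf_deg_def sum_mset_distrib_left del: mult_Suc_right)
qed

lemma scale_parts_scale_parts:
  "0 < j \<Longrightarrow> 0 < k \<Longrightarrow> scale_parts j (scale_parts k l) = scale_parts (j * k) l"
  by (simp add: scale_parts_def image_mset.compositionality comp_def Suc_mult_Suc_minus_1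
      mult.assoc del: mult_Suc_right)

lemma scale_parts_inverse:
  "0 < k \<Longrightarrow> image_mset (\<lambda>i. Suc i div k - 1) (scale_parts k l) = l"
  by (simp add: scale_parts_def image_mset.compositionality comp_def Suc_mult_Suc_minus_1
      del: mult_Suc_right)

lemma scale_parts_inj: "0 < k \<Longrightarrow> scale_parts k a = scale_parts k b \<Longrightarrow> a = b"
  by (metis scale_parts_inverse)

lemma scale_parts_dvd: "0 < k \<Longrightarrow> i \<in># scale_parts k l \<Longrightarrow> k dvd Suc i"
  by (auto simp: scale_parts_def Suc_mult_Suc_minus_1 simp del: mult_Suc_right)

lemma scale_parts_image_div:
  assumes "\<forall>i\<in>#l. k dvd Suc i"
  shows "scale_parts k (image_mset (\<lambda>i. Suc i div k - 1) l) = l"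
proof -
  have "k * Suc (Suc i div k - 1) - 1 = i" if "i \<in># l" for i
  proof -
    from assms that obtain q where q: "Suc i = k * q" by (auto elim: dvdE)
    have "k * q \<noteq> 0" by (simp flip: q)
    hence "q \<noteq> 0" "k \<noteq> 0" by auto
    hence "Suc i div k = q" using q by simp
    thus ?thesis using q \<open>q \<noteq> 0\<close> by (cases q) auto
  qed
  hence "image_mset (\<lambda>i. k * Suc (Suc i div k - 1) - 1) l = image_mset id l"
    by (intro image_mset_cong) simp
  thus ?thesis by (simp add: scale_parts_def image_mset.compositionality comp_def)
qed

definition adams :: "nat \<Rightarrow> symfun \<Rightarrow> symfun" where
  "adams k x = Abs_sf (pleth_pk k (sf_nth x))"

lemma sf_nth_adams_scale_parts: "0 < k \<Longrightarrow> sf_nth (adams k x) (scale_parts k l) = sf_nth x l"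
  using scale_parts_inverse[of k l] scale_parts_dvd[of k _ l] by (simp add: adams_def pleth_pk_def)

lemma sf_nth_adams_cases:
  assumes "0 < k"
  obtains l' where "l = scale_parts k l'" "\<And>x. sf_nth (adams k x) l = sf_nth x l'"
  | "\<And>l'. l \<noteq> scale_parts k l'" "\<And>x. sf_nth (adams k x) l = 0"
proof (cases "\<exists>l'. l = scale_parts k l'")
  case True
  thus thesis using that(1) sf_nth_adams_scale_parts[OF assms] by blast
next
  case False
  hence "\<not> (\<forall>i\<in>#l. k dvd Suc i)" using scale_parts_image_div by metis
  hence "sf_nth (adams k x) l = 0" for x by (auto simp: adams_def pleth_pk_def)
  thus thesis using that(2) False by blast
qed

lemma adams_add: "adams k (x + y) = adams k x + adams k y"
  by (rule symfun_eqI) (simp add: adams_def pleth_pk_def)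

lemma adams_uminus: "adams k (- x) = - adams k x"
  by (rule symfun_eqI) (simp add: adams_def pleth_pk_def)

lemma adams_diff: "adams k (x - y) = adams k x - adams k y"
  by (rule symfun_eqI) (simp add: adams_def pleth_pk_def)

lemma adams_const_mult: "adams k (sf_const c * x) = sf_const c * adams k x"
  by (rule symfun_eqI) (simp add: adams_def pleth_pk_def)

lemma adams_one: assumes k: "0 < k" shows "adams k 1 = 1"
proof (rule symfun_eqI)
  fix l show "sf_nth (adams k 1) l = sf_nth 1 l"
  proof (cases rule: sf_nth_adams_cases[OF k, of l])
    case (1 l')
    thus ?thesis by (cases "l' = {#}") auto
  next
    case 2
    hence "l \<noteq> {#}" by (metis scale_parts_empty)
    thus ?thesis using 2 by simp
  qed
qed

lemma adams_const: "0 < k \<Longrightarrow> adams k (sf_const c) = sf_const c"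
  using adams_const_mult[of k c 1] by (simp add: adams_one)

lemma msplits_scale_parts:
  assumes k: "0 < k"
  shows "msplits (scale_parts k l) = map_prod (scale_parts k) (scale_parts k) ` msplits l"
proof (intro equalityI subsetI)
  fix p assume "p \<in> msplits (scale_parts k l)"
  then obtain c d where p: "p = (c, d)" "image_mset (\<lambda>i. k * Suc i - 1) l = c + d"
    by (auto simp: msplits_def scale_parts_def)
  then obtain c' d' where "l = c' + d'" "c = scale_parts k c'" "d = scale_parts k d'"
    by (auto simp: scale_parts_def dest: image_mset_eq_plusD)
  thus "p \<in> map_prod (scale_parts k) (scale_parts k) ` msplits l"
    using p by (auto simp: msplits_def)
qed (auto simp: msplits_def simp flip: scale_parts_plus)

lemma adams_mult: assumes k: "0 < k" shows "adams k (x * y) = adams k x * adams k y"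
proof (rule symfun_eqI)
  fix l
  show "sf_nth (adams k (x * y)) l = sf_nth (adams k x * adams k y) l"
  proof (cases rule: sf_nth_adams_cases[OF k, of l])
    case (1 l')
    have "inj_on (map_prod (scale_parts k) (scale_parts k)) (msplits l')"
      by (auto simp: inj_on_def dest: scale_parts_inj[OF k])
    thus ?thesis using 1
      by (simp add: sf_nth_mult_msplits msplits_scale_parts[OF k] sum.reindex
                    sf_nth_adams_scale_parts[OF k] split_beta)
  next
    case 2
    have "sf_nth (adams k x) c * sf_nth (adams k y) d = 0" if "(c, d) \<in> msplits l" for c d
    proof (cases rule: sf_nth_adams_cases[OF k, of c])
      case (1 c')
      show ?thesis
      proof (cases rule: sf_nth_adams_cases[OF k, of d])
        case (1 d')
        hence "l = scale_parts k (c' + d')" using \<open>c = scale_parts k c'\<close> that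
          by (simp add: msplits_def)
        thus ?thesis using 2 by blast
      qed simp
    qed simp
    thus ?thesis using 2 by (simp add: sf_nth_mult_msplits sum.neutral split_beta)
  qed
qed

lemma vanishes_below_adams_mult:
  assumes k: "0 < k" and x: "vanishes_below n x"
  shows "vanishes_below (k * n) (adams k x)"
proof (rule vanishes_belowI)
  fix l assume l: "sf_deg l < k * n"
  show "sf_nth (adams k x) l = 0"
  proof (cases rule: sf_nth_adams_cases[OF k, of l])
    case (1 l')
    hence "sf_deg l' < n" using l k by (simp add: sf_deg_scale_parts)
    thus ?thesis using 1 x by (simp add: vanishes_belowD)
  qed simp
qed

lemma vanishes_below_adams: "0 < k \<Longrightarrow> vanishes_below n x \<Longrightarrow> vanishes_below n (adams k x)"
  by (rule vanishes_below_mono[OF vanishes_below_adams_mult]) auto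

lemma adams_adams: assumes j: "0 < j" and k: "0 < k" shows "adams j (adams k x) = adams (j * k) x"
proof (rule symfun_eqI)
  fix l
  have jk: "0 < j * k" using j k by simp
  show "sf_nth (adams j (adams k x)) l = sf_nth (adams (j * k) x) l"
  proof (cases rule: sf_nth_adams_cases[OF jk, of l])
    case (1 l')
    hence "l = scale_parts j (scale_parts k l')" by (simp add: scale_parts_scale_parts[OF j k])
    thus ?thesis using 1 by (simp add: sf_nth_adams_scale_parts[OF j] sf_nth_adams_scale_parts[OF k])
  next
    case 2
    show ?thesis
    proof (cases rule: sf_nth_adams_cases[OF j, of l])
      case (1 m)
      have "sf_nth (adams k x) m = 0"
      proof (cases rule: sf_nth_adams_cases[OF k, of m])
        case (1 l'')
        hence "l = scale_parts (j * k) l''" using \<open>l = scale_parts j m\<close>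
          by (simp add: scale_parts_scale_parts[OF j k])
        thus ?thesis using 2 by blast
      qed simp
      thus ?thesis using 1 2 by simp
    qed (use 2 in simp)
  qed
qed

lemma adams_1 [simp]: "adams 1 x = x"
  by (rule symfun_eqI) (metis sf_nth_adams_scale_parts zero_less_one scale_parts_1)

lemma adams_fps_subst:
  "0 < k \<Longrightarrow> vanishes_below 1 u \<Longrightarrow> adams k (fps_subst A u) = fps_subst A (adams k u)"
  by (rule fps_subst_commute)
     (auto simp: adams_add adams_mult adams_one adams_const vanishes_below_adams)

lemma adams_graded_sum:
  "0 < k \<Longrightarrow> (\<And>j. vanishes_below j (F j)) \<Longrightarrow>
     adams k (graded_sum F) = graded_sum (\<lambda>j. adams k (F j))"
  by (rule graded_sum_commute) (auto simp: adams_add vanishes_below_adams)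

section \<open>Plethysm\<close>

definition pleth_monomial :: "nat multiset \<Rightarrow> symfun \<Rightarrow> symfun" where
  "pleth_monomial m f = (\<Prod>i\<in>#m. adams (Suc i) f)"

lemma sf_nth_prod_list:
  "sf_nth (prod_list (map G xs)) = foldr sf_mult (map (\<lambda>i. sf_nth (G i)) xs) sf_one"
  by (induction xs) (auto simp: sf_nth_one sf_nth_mult)

lemma sf_nth_pleth_monomial: "sf_nth (pleth_monomial m f) = pleth_mono m (sf_nth f)"
proof -
  have "pleth_monomial m f = prod_list (map (\<lambda>i. adams (Suc i) f) (sorted_list_of_multiset m))"
    unfolding pleth_monomial_def
    by (metis mset_map mset_sorted_list_of_multiset prod_mset_prod_list)
  thus ?thesis
    by (simp add: pleth_mono_def sf_prod_list_def sf_nth_prod_list adams_def)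
qed

lemma pleth_monomial_empty [simp]: "pleth_monomial {#} f = 1"
  by (simp add: pleth_monomial_def)

lemma pleth_monomial_add_mset: "pleth_monomial (add_mset i m) f = adams (Suc i) f * pleth_monomial m f"
  by (simp add: pleth_monomial_def)

lemma pleth_monomial_plus: "pleth_monomial (a + b) f = pleth_monomial a f * pleth_monomial b f"
  by (simp add: pleth_monomial_def)

lemma vanishes_below_pleth_monomial:
  "vanishes_below 1 f \<Longrightarrow> vanishes_below (sf_deg m) (pleth_monomial m f)"
proof (induction m)
  case (add i m)
  have "vanishes_below (Suc i * 1) (adams (Suc i) f)"
    by (rule vanishes_below_adams_mult) (use add in auto)
  hence "vanishes_below (Suc i + sf_deg m) (adams (Suc i) f * pleth_monomial m f)"
    using add by (intro vanishes_below_mult) auto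
  thus ?case by (simp add: pleth_monomial_add_mset)
qed simp

definition pleth :: "symfun \<Rightarrow> symfun \<Rightarrow> symfun" where
  "pleth g f = Abs_sf (sf_comp (sf_nth g) (sf_nth f))"

lemma Abs_sf_sf_comp: "Abs_sf (sf_comp g f) = pleth (Abs_sf g) (Abs_sf f)"
  by (simp add: pleth_def)

lemma sf_nth_pleth:
  "sf_nth (pleth g f) l = (\<Sum>m\<in>{m. sf_deg m \<le> sf_deg l}. sf_nth g m * sf_nth (pleth_monomial m f) l)"
  by (simp add: pleth_def sf_comp_def sf_nth_pleth_monomial)

lemma sf_nth_pleth_superset:
  assumes f: "vanishes_below 1 f" and M: "finite M" "{m. sf_deg m \<le> sf_deg l} \<subseteq> M"
  shows "sf_nth (pleth g f) l = (\<Sum>m\<in>M. sf_nth g m * sf_nth (pleth_monomial m f) l)"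
  unfolding sf_nth_pleth
  by (rule sum.mono_neutral_left[OF M])
     (auto simp: vanishes_belowD[OF vanishes_below_pleth_monomial[OF f]])

lemma pleth_add: "pleth (g + h) f = pleth g f + pleth h f"
  by (rule symfun_eqI) (simp add: sf_nth_pleth algebra_simps sum.distrib)

lemma pleth_const_mult: "pleth (sf_const c * g) f = sf_const c * pleth g f"
  by (rule symfun_eqI) (simp add: sf_nth_pleth sum_distrib_left mult.assoc)

lemma pleth_diff: "pleth (g - h) f = pleth g f - pleth h f"
  by (rule symfun_eqI) (simp add: sf_nth_pleth algebra_simps sum_subtractf)

lemma pleth_one: "pleth 1 f = 1"
proof (rule symfun_eqI)
  fix l
  have "sf_nth (pleth 1 f) l =
        (\<Sum>m\<in>{m. sf_deg m \<le> sf_deg l}. if m = {#} then sf_nth (pleth_monomial m f) l else 0)"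
    unfolding sf_nth_pleth by (intro sum.cong) auto
  thus "sf_nth (pleth 1 f) l = sf_nth 1 l" by (simp add: finite_sf_deg_le)
qed

lemma pleth_const: "pleth (sf_const c) f = sf_const c"
  using pleth_const_mult[of c 1 f] by (simp add: pleth_one)

lemma vanishes_below_pleth: "vanishes_below n g \<Longrightarrow> vanishes_below n (pleth g f)"
  by (rule vanishes_belowI) (auto simp: sf_nth_pleth vanishes_belowD intro!: sum.neutral)

definition power_sum :: "nat \<Rightarrow> symfun" where
  "power_sum k = Abs_sf (pvar k)"

lemma sf_nth_power_sum: "sf_nth (power_sum k) m = (if m = {#k - 1#} then 1 else 0)"
  by (simp add: power_sum_def pvar_def)

lemma vanishes_below_power_sum: "0 < k \<Longrightarrow> vanishes_below k (power_sum k)"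
  by (rule vanishes_belowI) (auto simp: sf_nth_power_sum)

lemma vanishes_below_1_power_sum: "0 < k \<Longrightarrow> vanishes_below 1 (power_sum k)"
  by (rule vanishes_below_mono[OF vanishes_below_power_sum]) auto

lemma pleth_power_sum:
  assumes k: "0 < k" and f: "vanishes_below 1 f"
  shows "pleth (power_sum k) f = adams k f"
proof (rule symfun_eqI)
  fix l
  let ?M = "insert {#k - 1#} {m. sf_deg m \<le> sf_deg l}"
  have "sf_nth (pleth (power_sum k) f) l = (\<Sum>m\<in>?M. sf_nth (power_sum k) m * sf_nth (pleth_monomial m f) l)"
    by (rule sf_nth_pleth_superset[OF f]) (auto simp: finite_sf_deg_le)
  also have "\<dots> = (\<Sum>m\<in>?M. if m = {#k - 1#} then sf_nth (pleth_monomial m f) l else 0)"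
    by (intro sum.cong) (auto simp: sf_nth_power_sum)
  also have "\<dots> = sf_nth (pleth_monomial {#k - 1#} f) l"
    by (simp add: finite_sf_deg_le)
  also have "\<dots> = sf_nth (adams k f) l"
    using k by (simp add: pleth_monomial_def)
  finally show "sf_nth (pleth (power_sum k) f) l = sf_nth (adams k f) l" .
qed

lemma sf_nth_pleth_mult_expand:
  fixes l :: "nat multiset"
  assumes f: "vanishes_below 1 f"
  defines "M \<equiv> {m. sf_deg m \<le> sf_deg l}"
  shows "sf_nth (pleth (g * h) f) l = (\<Sum>p\<in>M \<times> M.
           sf_nth g (fst p) * sf_nth h (snd p) * sf_nth (pleth_monomial (fst p + snd p) f) l)"
    (is "_ = (\<Sum>p\<in>M \<times> M. ?G p)")
proof -
  have finM: "finite M" by (simp add: M_def finite_sf_deg_le)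
  have "sf_nth (pleth (g * h) f) l = (\<Sum>m\<in>M. \<Sum>p\<in>msplits m. ?G p)"
    unfolding sf_nth_pleth M_def sf_nth_mult_msplits sum_distrib_right split_beta
    by (intro sum.cong refl) (auto simp: msplits_def)
  also have "\<dots> = (\<Sum>(m, p)\<in>Sigma M msplits. ?G p)"
    by (subst sum.Sigma) (auto simp: finM)
  also have "\<dots> = (\<Sum>p\<in>{p. sf_deg (fst p + snd p) \<le> sf_deg l}. ?G p)"
    by (rule sum.reindex_bij_witness[where i = "\<lambda>p. (fst p + snd p, p)" and j = snd])
       (auto simp: M_def msplits_def)
  also have "\<dots> = (\<Sum>p\<in>M \<times> M. ?G p)"
    by (rule sum.mono_neutral_left)
       (use finM in \<open>auto simp: M_def vanishes_belowD[OF vanishes_below_pleth_monomial[OF f]]\<close>)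
  finally show ?thesis .
qed

lemma sf_nth_mult_pleth_expand:
  fixes l :: "nat multiset"
  assumes f: "vanishes_below 1 f"
  defines "M \<equiv> {m. sf_deg m \<le> sf_deg l}"
  shows "sf_nth (pleth g f * pleth h f) l = (\<Sum>p\<in>M \<times> M.
           sf_nth g (fst p) * sf_nth h (snd p) * sf_nth (pleth_monomial (fst p + snd p) f) l)"
proof -
  have finM: "finite M" by (simp add: M_def finite_sf_deg_le)
  let ?Q = "\<lambda>a. sf_nth (pleth_monomial a f)"
  have "sf_nth (pleth g f * pleth h f) l =
        (\<Sum>q\<in>msplits l. \<Sum>p\<in>M \<times> M. sf_nth g (fst p) * sf_nth h (snd p) * (?Q (fst p) (fst q) * ?Q (snd p) (snd q)))"
  proof (unfold sf_nth_mult_msplits split_beta, intro sum.cong refl)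
    fix q assume "q \<in> msplits l"
    hence "{m. sf_deg m \<le> sf_deg (fst q)} \<subseteq> M" "{m. sf_deg m \<le> sf_deg (snd q)} \<subseteq> M"
      by (auto simp: msplits_def M_def)
    hence "sf_nth (pleth g f) (fst q) = (\<Sum>a\<in>M. sf_nth g a * ?Q a (fst q))"
          "sf_nth (pleth h f) (snd q) = (\<Sum>b\<in>M. sf_nth h b * ?Q b (snd q))"
      by (simp_all add: sf_nth_pleth_superset[OF f finM])
    thus "sf_nth (pleth g f) (fst q) * sf_nth (pleth h f) (snd q) =
          (\<Sum>p\<in>M \<times> M. sf_nth g (fst p) * sf_nth h (snd p) * (?Q (fst p) (fst q) * ?Q (snd p) (snd q)))"
      by (simp add: sum_product sum.cartesian_product split_beta mult_ac)
  qed
  also have "\<dots> = (\<Sum>p\<in>M \<times> M. \<Sum>q\<in>msplits l.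
                   sf_nth g (fst p) * sf_nth h (snd p) * (?Q (fst p) (fst q) * ?Q (snd p) (snd q)))"
    by (rule sum.swap)
  also have "\<dots> = (\<Sum>p\<in>M \<times> M. sf_nth g (fst p) * sf_nth h (snd p) * ?Q (fst p + snd p) l)"
    by (simp add: pleth_monomial_plus sf_nth_mult_msplits split_beta sum_distrib_left)
  finally show ?thesis .
qed

lemma pleth_mult: "vanishes_below 1 f \<Longrightarrow> pleth (g * h) f = pleth g f * pleth h f"
  by (rule symfun_eqI) (simp add: sf_nth_pleth_mult_expand sf_nth_mult_pleth_expand)

lemma pleth_fps_subst:
  "vanishes_below 1 f \<Longrightarrow> vanishes_below 1 h \<Longrightarrow> pleth (fps_subst A h) f = fps_subst A (pleth h f)"
  by (rule fps_subst_commute[where \<phi> = "\<lambda>g. pleth g f"])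
     (auto simp: pleth_add pleth_mult pleth_one pleth_const vanishes_below_pleth)

lemma pleth_graded_sum:
  "(\<And>k. vanishes_below k (F k)) \<Longrightarrow> pleth (graded_sum F) f = graded_sum (\<lambda>k. pleth (F k) f)"
  by (rule graded_sum_commute[where \<phi> = "\<lambda>g. pleth g f"]) (auto simp: pleth_add vanishes_below_pleth)

section \<open>The sign twist\<close>

definition negate_vars :: "symfun \<Rightarrow> symfun" where
  "negate_vars x = Abs_sf (\<lambda>l. (-1) ^ size l * sf_nth x l)"

lemma sf_nth_negate_vars: "sf_nth (negate_vars x) l = (-1) ^ size l * sf_nth x l"
  by (simp add: negate_vars_def)

lemma Abs_sf_susp: "Abs_sf (susp f) = - negate_vars (Abs_sf f)"
  by (rule symfun_eqI) (simp add: sf_nth_negate_vars susp_def)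

lemma negate_vars_add: "negate_vars (x + y) = negate_vars x + negate_vars y"
  by (rule symfun_eqI) (simp add: sf_nth_negate_vars algebra_simps)

lemma negate_vars_mult: "negate_vars (x * y) = negate_vars x * negate_vars y"
  by (rule symfun_eqI)
     (auto simp: sf_nth_negate_vars sf_nth_mult_msplits sum_distrib_left msplits_def power_add
        mult_ac intro!: sum.cong)

lemma negate_vars_one: "negate_vars 1 = 1"
  by (rule symfun_eqI) (simp add: sf_nth_negate_vars sf_nth_one sf_one_def)

lemma negate_vars_const: "negate_vars (sf_const c) = sf_const c"
  by (rule symfun_eqI) (simp add: sf_nth_negate_vars sf_nth_const)

lemma vanishes_below_negate_vars: "vanishes_below n x \<Longrightarrow> vanishes_below n (negate_vars x)"
  by (auto simp: vanishes_below_def sf_nth_negate_vars)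

lemma negate_vars_adams: assumes k: "0 < k" shows "negate_vars (adams k x) = adams k (negate_vars x)"
proof (rule symfun_eqI)
  fix l show "sf_nth (negate_vars (adams k x)) l = sf_nth (adams k (negate_vars x)) l"
    by (cases rule: sf_nth_adams_cases[OF k, of l]) (auto simp: sf_nth_negate_vars scale_parts_def)
qed

lemma negate_vars_power_sum: "negate_vars (power_sum k) = - power_sum k"
  by (rule symfun_eqI) (simp add: sf_nth_negate_vars sf_nth_power_sum)

lemma negate_vars_fps_subst:
  "vanishes_below 1 u \<Longrightarrow> negate_vars (fps_subst A u) = fps_subst A (negate_vars u)"
  by (rule fps_subst_commute)
     (auto simp: negate_vars_add negate_vars_mult negate_vars_one negate_vars_const
        vanishes_below_negate_vars)

lemma negate_vars_graded_sum: "negate_vars (graded_sum F) = graded_sum (\<lambda>k. negate_vars (F k))"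
  by (rule symfun_eqI) (simp add: sf_nth_negate_vars sf_nth_graded_sum sum_distrib_left)

section \<open>The derivative with respect to p_1\<close>

definition deriv_p1 :: "symfun \<Rightarrow> symfun" where
  "deriv_p1 x = Abs_sf (dp1 (sf_nth x))"

lemma sf_nth_deriv_p1: "sf_nth (deriv_p1 x) l = of_nat (count l 0 + 1) * sf_nth x (add_mset 0 l)"
  by (simp add: deriv_p1_def dp1_def)

lemma Abs_sf_dp1: "Abs_sf (dp1 f) = deriv_p1 (Abs_sf f)"
  by (simp add: deriv_p1_def)

lemma deriv_p1_add: "deriv_p1 (x + y) = deriv_p1 x + deriv_p1 y"
  by (rule symfun_eqI) (simp add: sf_nth_deriv_p1 algebra_simps)

lemma deriv_p1_diff: "deriv_p1 (x - y) = deriv_p1 x - deriv_p1 y"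
  by (rule symfun_eqI) (simp add: sf_nth_deriv_p1 algebra_simps)

lemma deriv_p1_const_mult: "deriv_p1 (sf_const c * x) = sf_const c * deriv_p1 x"
  by (rule symfun_eqI) (simp add: sf_nth_deriv_p1)

lemma deriv_p1_one: "deriv_p1 1 = 0"
  by (rule symfun_eqI) (simp add: sf_nth_deriv_p1)

lemma deriv_p1_sum: "deriv_p1 (sum f A) = (\<Sum>i\<in>A. deriv_p1 (f i))"
  by (rule symfun_eqI) (simp add: sf_nth_deriv_p1 sum_distrib_left)

lemma vanishes_below_deriv_p1: "vanishes_below (Suc n) x \<Longrightarrow> vanishes_below n (deriv_p1 x)"
  by (auto simp: vanishes_below_def sf_nth_deriv_p1)

lemma deriv_p1_power_sum_1: "deriv_p1 (power_sum 1) = 1"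
  by (rule symfun_eqI) (simp add: sf_nth_deriv_p1 sf_nth_power_sum sf_nth_one sf_one_def)

lemma deriv_p1_adams: assumes k: "2 \<le> k" shows "deriv_p1 (adams k x) = 0"
proof (rule symfun_eqI)
  fix l
  have k0: "0 < k" using k by simp
  have "sf_nth (adams k x) (add_mset 0 l) = 0"
  proof (cases rule: sf_nth_adams_cases[OF k0, of "add_mset 0 l"])
    case (1 l')
    have "0 \<in># scale_parts k l'" by (simp flip: 1(1))
    hence "k dvd Suc 0" by (rule scale_parts_dvd[OF k0])
    thus ?thesis using k by simp
  qed simp
  thus "sf_nth (deriv_p1 (adams k x)) l = sf_nth 0 l" by (simp add: sf_nth_deriv_p1)
qed

lemma sum_msplits_add_mset_0:
  "(\<Sum>q\<in>msplits (add_mset 0 l). of_nat (count (fst q) 0) * F (fst q) (snd q)) =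
   (\<Sum>q\<in>msplits l. of_nat (count (fst q) 0 + 1) * F (add_mset 0 (fst q)) (snd q))"
proof -
  let ?S = "{q\<in>msplits (add_mset 0 l). 0 \<in># fst q}"
  let ?g = "\<lambda>q. of_nat (count (fst q) 0) * F (fst q) (snd q)"
  let ?h = "map_prod (add_mset 0) id"
  have bij: "bij_betw ?h (msplits l) ?S"
    by (rule bij_betw_byWitness[where f' = "map_prod (\<lambda>a. a - {#0#}) id"])
       (auto simp: msplits_def insert_DiffM)
  have "(\<Sum>q\<in>msplits (add_mset 0 l). ?g q) = (\<Sum>q\<in>?S. ?g q)"
    by (rule sum.mono_neutral_right) (auto simp: not_in_iff)
  also have "\<dots> = (\<Sum>q\<in>msplits l. ?g (?h q))"
    by (rule sum.reindex_bij_betw[OF bij, symmetric])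
  finally show ?thesis by (simp add: add.commute)
qed

text \<open>The factor count l 0 + 1 in the coefficient of the derivative splits as the sum of the
  multiplicities of p_1 in the two factors.\<close>

lemma deriv_p1_mult: "deriv_p1 (x * y) = deriv_p1 x * y + x * deriv_p1 y"
proof (rule symfun_eqI)
  fix l
  let ?S = "msplits (add_mset 0 l)"
  let ?c = "\<lambda>m. of_nat (count m 0) :: rat"
  have cnt: "q \<in> ?S \<Longrightarrow> ?c (fst q) + ?c (snd q) = of_nat (count l 0 + 1)" for q
    by (auto simp: msplits_def simp flip: of_nat_add count_union)
  have D: "sf_nth (deriv_p1 u * v) l = (\<Sum>q\<in>?S. ?c (fst q) * (sf_nth u (fst q) * sf_nth v (snd q)))"
    for u v
    using sum_msplits_add_mset_0[where F = "\<lambda>a b. sf_nth u a * sf_nth v b"]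
    by (simp add: sf_nth_mult_msplits sf_nth_deriv_p1 split_beta mult.assoc)
  have "sf_nth (deriv_p1 (x * y)) l = (\<Sum>q\<in>?S. (?c (fst q) + ?c (snd q)) * (sf_nth x (fst q) * sf_nth y (snd q)))"
    by (simp add: sf_nth_deriv_p1 sf_nth_mult_msplits sum_distrib_left split_beta cnt cong: sum.cong)
  also have "\<dots> = sf_nth (deriv_p1 x * y) l + sf_nth (deriv_p1 y * x) l"
    unfolding D sum_msplits_swap[where F = "\<lambda>a b. ?c a * (sf_nth y a * sf_nth x b)"]
    by (simp add: algebra_simps sum.distrib)
  finally show "sf_nth (deriv_p1 (x * y)) l = sf_nth (deriv_p1 x * y + x * deriv_p1 y) l"
    by (simp add: mult.commute)
qed

lemma deriv_p1_power: "deriv_p1 (x ^ Suc n) = sf_const (of_nat (Suc n)) * x ^ n * deriv_p1 x"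
proof (induction n)
  case (Suc n)
  have "deriv_p1 (x ^ Suc (Suc n)) = deriv_p1 x * x ^ Suc n + x * deriv_p1 (x ^ Suc n)"
    by (simp add: deriv_p1_mult)
  also have "\<dots> = (sf_const 1 + sf_const (of_nat (Suc n))) * x ^ Suc n * deriv_p1 x"
    using Suc by (simp add: algebra_simps)
  also have "sf_const 1 + sf_const (of_nat (Suc n)) = sf_const (of_nat (Suc (Suc n)))"
    by (simp only: sf_const_add[symmetric]) simp
  finally show ?case .
qed (simp add: deriv_p1_mult deriv_p1_one)

lemma deriv_p1_fps_subst:
  assumes u: "vanishes_below 1 u"
  shows "deriv_p1 (fps_subst A u) = fps_subst (fps_deriv A) u * deriv_p1 u"
proof (rule symfun_eqI_approx)
  fix N
  let ?a = "fps_subst_trunc N (fps_deriv A) u * deriv_p1 u"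
  have "deriv_p1 (fps_subst_trunc (Suc N) A u) =
          (\<Sum>n\<le>Suc N. sf_const (A $ n) * deriv_p1 (u ^ n))"
    by (simp only: fps_subst_trunc_def deriv_p1_sum deriv_p1_const_mult)
  also have "\<dots> = sf_const (A $ 0) * deriv_p1 (u ^ 0) +
                  (\<Sum>n\<le>N. sf_const (A $ Suc n) * deriv_p1 (u ^ Suc n))"
    by (rule sum.atMost_Suc_shift)
  also have "\<dots> = (\<Sum>n\<le>N. sf_const (A $ Suc n) * (sf_const (of_nat (Suc n)) * u ^ n * deriv_p1 u))"
    by (simp add: deriv_p1_one deriv_p1_power del: power_Suc)
  also have "\<dots> = ?a"
  proof -
    have "fps_deriv A $ n = A $ Suc n * of_nat (Suc n)" for n
      by (simp add: Suc_eq_plus1 algebra_simps)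
    thus ?thesis
      by (simp add: fps_subst_trunc_def sum_distrib_left sum_distrib_right sf_const_mult mult_ac
          del: fps_deriv_nth)
  qed
  finally have "deriv_p1 (fps_subst_trunc (Suc N) A u) = ?a" .
  hence "vanishes_below (Suc N) (deriv_p1 (fps_subst A u) - ?a)"
    using vanishes_below_deriv_p1[OF fps_subst_trunc_approx[OF u, of "Suc N" A]]
    by (simp add: deriv_p1_diff)
  moreover have "vanishes_below (Suc N) (fps_subst (fps_deriv A) u * deriv_p1 u - ?a)"
    using vanishes_below_mult_left[OF fps_subst_trunc_approx[OF u]]
    by (simp add: algebra_simps flip: left_diff_distrib)
  ultimately show "\<exists>a. vanishes_below (Suc N) (deriv_p1 (fps_subst A u) - a) \<and>
                       vanishes_below (Suc N) (fps_subst (fps_deriv A) u * deriv_p1 u - a)"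
    by blast
qed

section \<open>Moebius inversion\<close>

lemma sum_Pow_neg_one_power_card:
  assumes "finite A"
  shows "(\<Sum>X\<in>Pow A. (-1 :: 'a :: comm_ring_1) ^ card X) = (if A = {} then 1 else 0)"
proof -
  have "(\<Prod>x\<in>A. (1 :: 'a) - 1) = (\<Sum>X\<in>Pow A. (-1) ^ card X * (\<Prod>x\<in>X. 1) * (\<Prod>x\<in>A - X. 1))"
    by (rule prod_diff_conv_sum[OF assms])
  thus ?thesis using assms by (auto simp: power_0_left)
qed

lemma prime_factorization_prod_primes:
  assumes "finite S" "\<forall>p\<in>S. prime (p :: nat)"
  shows "prime_factorization (\<Prod>S) = mset_set S"
proof -
  have "\<Prod>S = prod_mset (mset_set S)" by (simp add: prod_unfold_prod_mset)
  also have "prime_factorization \<dots> = mset_set S"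
    by (rule prime_factorization_prod_mset_primes) (use assms in auto)
  finally show ?thesis .
qed

lemma prime_factorization_squarefree:
  assumes "squarefree (k :: nat)" "k > 0"
  shows "prime_factorization k = mset_set (prime_factors k)"
proof (rule multiset_eqI)
  fix p
  show "count (prime_factorization k) p = count (mset_set (prime_factors k)) p"
  proof (cases "prime p")
    case True
    have "multiplicity p k \<le> 1" using assms True by (simp add: squarefree_factorial_semiring'')
    moreover have "0 < multiplicity p k" if "p \<in># prime_factorization k"
      using that True by (simp add: count_prime_factorization_prime flip: count_greater_zero_iff)
    ultimately show ?thesis
      using True by (auto simp: count_prime_factorization_prime count_mset_set' not_in_iff)
  qed (auto simp: count_prime_factorization_nonprime count_mset_set')
qed

lemma prod_prime_factors_squarefree:
  assumes "squarefree (k :: nat)" "k > 0"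
  shows "\<Prod>(prime_factors k) = k"
proof -
  have "k = prod_mset (prime_factorization k)"
    using assms by (simp add: prod_mset_prime_factorization_nat)
  also have "\<dots> = prod_mset (mset_set (prime_factors k))"
    by (rule arg_cong[OF prime_factorization_squarefree[OF assms]])
  finally show ?thesis by (simp add: prod_unfold_prod_mset)
qed

lemma bij_betw_Prod_squarefree_divisors:
  assumes n: "(n :: nat) > 0"
  shows "bij_betw Prod (Pow (prime_factors n)) {k. k dvd n \<and> squarefree k}"
proof (rule bij_betwI')
  fix S T assume "S \<in> Pow (prime_factors n)" "T \<in> Pow (prime_factors n)"
  hence "finite S" "finite T" "\<forall>p\<in>S. prime p" "\<forall>p\<in>T. prime p"
    using finite_subset by (auto simp: in_prime_factors_iff)
  thus "(\<Prod>S = \<Prod>T) = (S = T)"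
    by (metis finite_set_mset_mset_set prime_factorization_prod_primes)
next
  fix S assume S: "S \<in> Pow (prime_factors n)"
  hence fS: "finite S" and pS: "\<forall>p\<in>S. prime p"
    using finite_subset by (auto simp: in_prime_factors_iff)
  have pf: "prime_factorization (\<Prod>S) = mset_set S"
    by (rule prime_factorization_prod_primes[OF fS pS])
  have nz: "\<Prod>S \<noteq> 0" using pS fS by (auto simp: prime_gt_0_nat)
  have "mset_set S \<subseteq># mset_set (prime_factors n)" using S by (intro subset_imp_msubset_mset_set) auto
  also have "\<dots> \<subseteq># prime_factorization n" by (rule mset_set_set_mset_msubset)
  finally have "\<Prod>S dvd n" using nz pf n by (intro prime_factorization_subset_imp_dvd) auto
  moreover have "squarefree (\<Prod>S)"
  proof (subst squarefree_factorial_semiring''[OF nz], intro allI impI)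
    fix p :: nat assume "prime p"
    hence "multiplicity p (\<Prod>S) = count (mset_set S) p"
      by (simp add: count_prime_factorization_prime flip: pf)
    thus "multiplicity p (\<Prod>S) \<le> 1" by (simp add: count_mset_set')
  qed
  ultimately show "\<Prod>S \<in> {k. k dvd n \<and> squarefree k}" by simp
next
  fix k assume k: "k \<in> {k. k dvd n \<and> squarefree k}"
  hence "k > 0" using n by (auto intro: Nat.gr0I)
  hence "k = \<Prod>(prime_factors k)" using k by (simp add: prod_prime_factors_squarefree)
  moreover have "prime_factors k \<in> Pow (prime_factors n)"
    using k n by (auto intro: dvd_prime_factors[THEN subsetD])
  ultimately show "\<exists>S\<in>Pow (prime_factors n). k = \<Prod>S" by blast
qed

lemma sum_moebius_divisors:
  assumes n: "(n :: nat) > 0"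
  shows "(\<Sum>k | k dvd n. moebius k) = (if n = 1 then 1 else 0)"
proof -
  have "(\<Sum>k | k dvd n. moebius k) = (\<Sum>k | k dvd n \<and> squarefree k. moebius k)"
    by (rule sum.mono_neutral_right) (use n in \<open>auto simp: moebius_def\<close>)
  also have "\<dots> = (\<Sum>k | k dvd n \<and> squarefree k. (-1) ^ card (prime_factors k))"
    by (simp add: moebius_def)
  also have "\<dots> = (\<Sum>S\<in>Pow (prime_factors n). (-1) ^ card (prime_factors (\<Prod>S)))"
    by (rule sum.reindex_bij_betw[symmetric, OF bij_betw_Prod_squarefree_divisors[OF n]])
  also have "\<dots> = (\<Sum>S\<in>Pow (prime_factors n). (-1) ^ card S)"
  proof (intro sum.cong refl)
    fix S assume "S \<in> Pow (prime_factors n)"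
    hence "finite S" "\<forall>p\<in>S. prime p"
      using finite_subset by (auto simp: in_prime_factors_iff)
    thus "(-1) ^ card (prime_factors (\<Prod>S)) = (-1 :: rat) ^ card S"
      by (simp add: prime_factorization_prod_primes)
  qed
  also have "\<dots> = (if n = 1 then 1 else 0)"
    using n by (simp add: sum_Pow_neg_one_power_card prime_factorization_empty_iff)
  finally show ?thesis .
qed

lemma sum_product_le_conv_sum_divisors:
  fixes d :: nat
  shows "(\<Sum>p\<in>{p\<in>{1..d} \<times> {1..d}. fst p * snd p \<le> d}. g (fst p) (snd p)) =
     (\<Sum>n\<in>{1..d}. \<Sum>k | k dvd n. g k (n div k))"
proof -
  have "(\<Sum>p\<in>{p\<in>{1..d} \<times> {1..d}. fst p * snd p \<le> d}. g (fst p) (snd p)) =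
        (\<Sum>q\<in>Sigma {1..d} (\<lambda>n. {k. k dvd n}). g (snd q) (fst q div snd q))"
  proof (rule sum.reindex_bij_witness[where j = "\<lambda>p. (fst p * snd p, fst p)"
        and i = "\<lambda>q. (snd q, fst q div snd q)"])
    fix p assume p: "p \<in> {p\<in>{1..d} \<times> {1..d}. fst p * snd p \<le> d}"
    hence p0: "fst p \<noteq> 0" by auto
    thus "(snd (fst p * snd p, fst p), fst (fst p * snd p, fst p) div snd (fst p * snd p, fst p)) = p"
      by (cases p) auto
    show "(fst p * snd p, fst p) \<in> Sigma {1..d} (\<lambda>n. {k. k dvd n})"
      using p by (cases p) (auto simp: Suc_le_eq One_nat_def)
    show "g (snd (fst p * snd p, fst p)) (fst (fst p * snd p, fst p) div snd (fst p * snd p, fst p)) =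
          g (fst p) (snd p)"
      using p0 by simp
  next
    fix q assume "q \<in> Sigma {1..d} (\<lambda>n. {k. k dvd n})"
    then obtain n k where nk: "q = (n, k)" "1 \<le> n" "n \<le> d" "k dvd n" by auto
    have "k \<noteq> 0" "n div k \<noteq> 0" using nk by (auto simp: Suc_le_eq One_nat_def elim!: dvdE)
    moreover have "k \<le> d" using nk dvd_imp_le[of k n] by auto
    moreover have "n div k \<le> d" using nk(3) div_le_dividend[of n k] by linarith
    ultimately show "(snd q, fst q div snd q) \<in> {p\<in>{1..d} \<times> {1..d}. fst p * snd p \<le> d}"
      using nk by auto
    show "(fst (snd q, fst q div snd q) * snd (snd q, fst q div snd q), fst (snd q, fst q div snd q)) = q"
      using nk by simp
  qed
  also have "\<dots> = (\<Sum>n\<in>{1..d}. \<Sum>k | k dvd n. g k (n div k))"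
    by (subst sum.Sigma) (auto simp: split_beta)
  finally show ?thesis .
qed

lemma moebius_inversion:
  fixes c :: "nat \<Rightarrow> rat"
  assumes d: "1 \<le> d" and c: "\<And>n. d < n \<Longrightarrow> c n = 0"
  shows "(\<Sum>k\<in>{1..d}. \<Sum>j\<in>{1..d}. moebius k / (of_nat k * of_nat j) * c (k * j)) = c 1"
proof -
  let ?g = "\<lambda>k j. moebius k / (of_nat k * of_nat j) * c (k * j)"
  have "(\<Sum>k\<in>{1..d}. \<Sum>j\<in>{1..d}. ?g k j) = (\<Sum>p\<in>{1..d} \<times> {1..d}. ?g (fst p) (snd p))"
    by (simp add: sum.cartesian_product split_beta)
  also have "\<dots> = (\<Sum>p\<in>{p\<in>{1..d} \<times> {1..d}. fst p * snd p \<le> d}. ?g (fst p) (snd p))"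
    by (rule sum.mono_neutral_right) (auto simp: c not_le)
  also have "\<dots> = (\<Sum>n\<in>{1..d}. \<Sum>k | k dvd n. ?g k (n div k))"
    by (rule sum_product_le_conv_sum_divisors)
  also have "\<dots> = (\<Sum>n\<in>{1..d}. \<Sum>k | k dvd n. moebius k / of_nat n * c n)"
    by (intro sum.cong refl) (simp flip: of_nat_mult)
  also have "\<dots> = (\<Sum>n\<in>{1..d}. c n / of_nat n * (\<Sum>k | k dvd n. moebius k))"
    by (simp add: sum_distrib_left mult_ac)
  also have "\<dots> = (\<Sum>n\<in>{1..d}. if n = 1 then c n else 0)"
  proof (intro sum.cong refl)
    fix n assume "n \<in> {1..d}"
    hence "n > 0" by simp
    thus "c n / of_nat n * (\<Sum>k | k dvd n. moebius k) = (if n = 1 then c n else 0)"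
      by (simp add: sum_moebius_divisors)
  qed
  also have "\<dots> = c 1" using d by simp
  finally show ?thesis .
qed

section \<open>The plethystic exponential\<close>

definition adams_sum :: "symfun \<Rightarrow> symfun" where
  "adams_sum y = graded_sum (\<lambda>k. sf_const (1 / of_nat k) * adams k y)"

definition pleth_exp :: "symfun \<Rightarrow> symfun" where
  "pleth_exp y = fps_subst (fps_exp 1) (adams_sum y)"

lemma vanishes_below_adams_sum_term:
  assumes y: "vanishes_below 1 y"
  shows "vanishes_below k (sf_const (1 / of_nat k) * adams k y)"
proof (cases "k = 0")
  case False
  hence "vanishes_below (k * 1) (adams k y)" by (intro vanishes_below_adams_mult y) simp
  thus ?thesis by (simp add: vanishes_below_const_mult)
qed simp

lemma vanishes_below_adams_sum: "vanishes_below n y \<Longrightarrow> vanishes_below n (adams_sum y)"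
  unfolding adams_sum_def
  by (intro vanishes_below_graded_sum vanishes_below_const_mult vanishes_below_adams)

lemma vanishes_below_1_adams_sum: "vanishes_below 1 (adams_sum y)"
  by (simp add: adams_sum_def vanishes_below_1_graded_sum)

lemma adams_sum_diff: "adams_sum (x - y) = adams_sum x - adams_sum y"
  by (simp add: adams_sum_def adams_diff right_diff_distrib graded_sum_diff)

lemma adams_sum_uminus: "adams_sum (- y) = - adams_sum y"
  by (simp add: adams_sum_def adams_uminus graded_sum_uminus)

lemma negate_vars_adams_sum: "negate_vars (adams_sum y) = adams_sum (negate_vars y)"
  unfolding adams_sum_def negate_vars_graded_sum
  by (intro graded_sum_cong) (simp add: negate_vars_mult negate_vars_const negate_vars_adams)

text \<open>Only the term k = 1 depends on p_1.\<close>

lemma deriv_p1_adams_sum: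
  assumes y: "vanishes_below 1 y"
  shows "deriv_p1 (adams_sum y) = deriv_p1 y"
proof (rule symfun_eqI_vanishes_below)
  fix n
  let ?F = "\<lambda>k. sf_const (1 / of_nat k) * adams k y"
  have "vanishes_below (Suc n) (deriv_p1 (adams_sum y - (\<Sum>k\<in>{1..Suc n}. ?F k)))"
    unfolding adams_sum_def
    by (intro vanishes_below_deriv_p1 graded_sum_approx vanishes_below_adams_sum_term y)
  moreover have "deriv_p1 (\<Sum>k\<in>{1..Suc n}. ?F k) = deriv_p1 y"
  proof -
    have "deriv_p1 (\<Sum>k\<in>{1..Suc n}. ?F k) = deriv_p1 (?F 1) + (\<Sum>k\<in>{Suc 1..Suc n}. deriv_p1 (?F k))"
      unfolding deriv_p1_sum by (rule sum.atLeast_Suc_atMost) simp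
    also have "(\<Sum>k\<in>{Suc 1..Suc n}. deriv_p1 (?F k)) = 0"
      by (intro sum.neutral) (auto simp: deriv_p1_const_mult deriv_p1_adams)
    finally show ?thesis by simp
  qed
  ultimately have "vanishes_below (Suc n) (deriv_p1 (adams_sum y) - deriv_p1 y)"
    by (simp add: deriv_p1_diff)
  thus "vanishes_below n (deriv_p1 (adams_sum y) - deriv_p1 y)"
    by (rule vanishes_below_mono) simp
qed

lemma vanishes_below_1_pleth_exp_minus_1: "vanishes_below 1 (pleth_exp y - 1)"
  by (simp add: vanishes_below_1_iff pleth_exp_def sf_nth_fps_subst)

lemma pleth_exp_uminus: "pleth_exp (- y) * pleth_exp y = 1"
proof -
  have "Abs_fps (\<lambda>n. (-1) ^ n * fps_exp 1 $ n) = (fps_exp (-1) :: rat fps)"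
    by (simp add: fps_eq_iff)
  hence "fps_subst (fps_exp 1) (- adams_sum y) = fps_subst (fps_exp (-1)) (adams_sum y)"
    by (simp only: fps_subst_uminus_arg)
  hence "pleth_exp (- y) * pleth_exp y = fps_subst (fps_exp (-1) * fps_exp 1) (adams_sum y)"
    by (simp add: pleth_exp_def adams_sum_uminus fps_subst_mult[OF vanishes_below_1_adams_sum])
  thus ?thesis by (simp add: fps_exp_add_mult[symmetric] fps_subst_one)
qed

lemma negate_vars_pleth_exp: "negate_vars (pleth_exp y) = pleth_exp (negate_vars y)"
  by (simp add: pleth_exp_def negate_vars_fps_subst negate_vars_adams_sum vanishes_below_1_adams_sum)

lemma deriv_p1_pleth_exp:
  "vanishes_below 1 y \<Longrightarrow> deriv_p1 (pleth_exp y) = pleth_exp y * deriv_p1 y"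
  by (simp add: pleth_exp_def deriv_p1_fps_subst deriv_p1_adams_sum vanishes_below_1_adams_sum)

lemma Abs_sf_Comm:
  "Abs_sf Comm = fps_subst (fps_exp 1) (graded_sum (\<lambda>k. sf_const (1 / of_nat k) * power_sum k)) - 1"
proof -
  have "Abs_fps (\<lambda>n. 1 / fact n) = (fps_exp 1 :: rat fps)" by (simp add: fps_eq_iff)
  thus ?thesis
    by (simp add: Comm_def sf_exp_def Abs_sf_sf_sub Abs_sf_sf_one Abs_sf_psubst Abs_sf_sf_series
        Abs_sf_sf_smult power_sum_def)
qed

lemma pleth_Comm:
  assumes y: "vanishes_below 1 y"
  shows "pleth (Abs_sf Comm) y = pleth_exp y - 1"
proof -
  have terms: "vanishes_below k (sf_const (1 / of_nat k) * power_sum k)" for k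
    by (cases "k = 0") (auto intro: vanishes_below_const_mult vanishes_below_power_sum)
  have "pleth (graded_sum (\<lambda>k. sf_const (1 / of_nat k) * power_sum k)) y = adams_sum y"
    by (simp add: pleth_graded_sum[OF terms] adams_sum_def pleth_const_mult pleth_power_sum[OF _ y]
        cong: graded_sum_cong)
  thus ?thesis
    by (simp add: Abs_sf_Comm pleth_diff pleth_one pleth_exp_def pleth_fps_subst[OF y]
        vanishes_below_1_graded_sum)
qed

text \<open>The difference of the two equations expresses y - q in degree n + 1 through y - q in
  degree n.\<close>

lemma pleth_exp_fixpoint_unique:
  assumes y: "vanishes_below 1 y" and q: "vanishes_below 1 q"
    and ey: "y * pleth_exp y = power_sum 1" and eq: "q * pleth_exp q = power_sum 1"
  shows "y = q"
proof (rule symfun_eqI_vanishes_below)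
  fix n show "vanishes_below n (y - q)"
  proof (induction n)
    case (Suc n)
    define e where "e x = pleth_exp x - 1" for x
    have "y - q = (q - y) * e q + y * (e q - e y)"
      using ey eq by (simp add: e_def algebra_simps)
    moreover have "vanishes_below (n + 1) ((q - y) * e q)"
      using Suc by (intro vanishes_below_mult) (simp_all add: e_def vanishes_below_1_pleth_exp_minus_1
          flip: vanishes_below_uminus_iff[of n "q - y"])
    moreover have "vanishes_below (1 + n) (y * (e q - e y))"
    proof (rule vanishes_below_mult[OF y])
      have "vanishes_below n (adams_sum q - adams_sum y)"
        using Suc by (simp add: vanishes_below_adams_sum flip: adams_sum_diff
            vanishes_below_uminus_iff[of n "q - y"])
      hence "vanishes_below n (fps_subst (fps_exp 1) (adams_sum q) - fps_subst (fps_exp 1) (adams_sum y))"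
        by (rule fps_subst_approx_arg[OF vanishes_below_1_adams_sum vanishes_below_1_adams_sum])
      thus "vanishes_below n (e q - e y)" by (simp add: e_def pleth_exp_def)
    qed
    ultimately show ?case by (metis vanishes_below_add Suc_eq_plus1 add.commute)
  qed simp
qed

lemma deriv_p1_fixpoint:
  assumes y: "vanishes_below 1 y" and ey: "y * pleth_exp y = power_sum 1"
  shows "(power_sum 1 + pleth_exp y) * deriv_p1 y = 1"
proof -
  have "deriv_p1 (y * pleth_exp y) = 1" by (simp add: ey deriv_p1_power_sum_1)
  hence "deriv_p1 y * pleth_exp y + y * pleth_exp y * deriv_p1 y = 1"
    by (simp add: deriv_p1_mult deriv_p1_pleth_exp[OF y] mult.assoc)
  thus ?thesis by (simp add: ey algebra_simps)
qed

section \<open>The plethystic logarithm\<close>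

lemma sum_moebius_adams_sum:
  assumes y: "vanishes_below 1 y"
  shows "graded_sum (\<lambda>k. sf_const (moebius k / of_nat k) * adams k (adams_sum y)) = y"
proof (rule symfun_eqI)
  fix l
  define d where "d = sf_deg l"
  define c where "c n = sf_nth (adams n y) l" for n
  show "sf_nth (graded_sum (\<lambda>k. sf_const (moebius k / of_nat k) * adams k (adams_sum y))) l = sf_nth y l"
  proof (cases "l = {#}")
    case True
    thus ?thesis using y by (simp add: sf_nth_graded_sum vanishes_below_1_iff)
  next
    case False
    hence d: "1 \<le> d" by (cases "sf_deg l") (auto simp: d_def)
    have c0: "c n = 0" if "d < n" for n
      using that vanishes_belowD[OF vanishes_below_adams_mult[OF _ y, of n]]
      by (simp add: c_def d_def)
    have "adams k (adams_sum y) = graded_sum (\<lambda>j. sf_const (1 / of_nat j) * adams (k * j) y)"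
      if "0 < k" for k
      unfolding adams_sum_def adams_graded_sum[OF that vanishes_below_adams_sum_term[OF y]]
      by (intro graded_sum_cong) (simp add: adams_const_mult adams_adams[OF that])
    hence "sf_nth (graded_sum (\<lambda>k. sf_const (moebius k / of_nat k) * adams k (adams_sum y))) l
        = (\<Sum>k\<in>{1..d}. \<Sum>j\<in>{1..d}. moebius k / (of_nat k * of_nat j) * c (k * j))"
      by (simp add: sf_nth_graded_sum d_def c_def sum_distrib_left)
    also have "\<dots> = c 1" by (rule moebius_inversion[OF d c0])
    finally show ?thesis by (simp add: c_def)
  qed
qed

lemma Abs_sf_susp_Lie:
  "Abs_sf (susp Lie) = graded_sum (\<lambda>k. sf_const (moebius k / of_nat k) * fps_subst (fps_ln 1) (power_sum k))"
proof -
  have ln: "- Abs_fps (\<lambda>n. (-1) ^ n * (if n = 0 then 0 else 1 / of_nat n)) = (fps_ln 1 :: rat fps)"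
  proof (rule fps_ext)
    fix n show "(- Abs_fps (\<lambda>n. (-1) ^ n * (if n = 0 then 0 else 1 / of_nat n))) $ n = (fps_ln 1 :: rat fps) $ n"
      by (cases n) (auto simp: fps_ln_nth)
  qed
  have "Abs_sf (susp Lie) = - graded_sum (\<lambda>k. negate_vars (sf_const (moebius k / of_nat k) *
          fps_subst (Abs_fps (\<lambda>n. if n = 0 then 0 else 1 / of_nat n)) (power_sum k)))"
    by (simp add: Abs_sf_susp Lie_def sf_mlog_def Abs_sf_sf_series Abs_sf_sf_smult Abs_sf_psubst
        negate_vars_graded_sum power_sum_def)
  also have "\<dots> = graded_sum (\<lambda>k. sf_const (moebius k / of_nat k) * fps_subst (fps_ln 1) (power_sum k))"
    by (simp add: negate_vars_mult negate_vars_const negate_vars_fps_subst vanishes_below_1_power_sum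
        negate_vars_power_sum fps_subst_uminus_arg fps_subst_uminus mult_minus_right
        flip: graded_sum_uminus ln cong: graded_sum_cong)
  finally show ?thesis .
qed

lemma fps_subst_ln_exp:
  assumes v: "vanishes_below 1 v"
  shows "fps_subst (fps_ln 1) (fps_subst (fps_exp 1) v - 1) = v"
proof -
  have "fps_subst (fps_exp 1) v - 1 = fps_subst (fps_exp 1 - 1) v" by (simp add: fps_subst_diff fps_subst_one)
  hence "fps_subst (fps_ln 1) (fps_subst (fps_exp 1) v - 1) = fps_subst (fps_ln 1 oo (fps_exp 1 - 1)) v"
    by (simp add: fps_subst_compose[OF v])
  also have "fps_ln 1 oo (fps_exp 1 - 1) = (fps_X :: rat fps)"
    by (simp add: fps_ln_fps_exp_inv fps_inv_fps_exp_compose)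
  finally show ?thesis by (simp add: fps_subst_X[OF v])
qed

lemma pleth_susp_Lie_Comm:
  assumes y: "vanishes_below 1 y"
  shows "pleth (Abs_sf (susp Lie)) (pleth_exp y - 1) = y"
proof -
  let ?Z = "pleth_exp y - 1"
  have Z: "vanishes_below 1 ?Z" by (rule vanishes_below_1_pleth_exp_minus_1)
  have W: "vanishes_below 1 (adams_sum y)" by (rule vanishes_below_1_adams_sum)
  have terms: "vanishes_below k (sf_const (moebius k / of_nat k) * fps_subst (fps_ln 1) (power_sum k))"
    for k
    by (cases "k = 0")
       (auto intro!: vanishes_below_const_mult vanishes_below_fps_subst vanishes_below_power_sum)
  have "fps_subst (fps_ln 1) (adams k ?Z) = adams k (adams_sum y)" if k: "0 < k" for k
  proof -
    have "adams k ?Z = fps_subst (fps_exp 1) (adams k (adams_sum y)) - 1"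
      by (simp add: pleth_exp_def adams_diff adams_one[OF k] adams_fps_subst[OF k W])
    thus ?thesis by (simp add: fps_subst_ln_exp vanishes_below_adams[OF k W])
  qed
  hence "pleth (Abs_sf (susp Lie)) ?Z =
           graded_sum (\<lambda>k. sf_const (moebius k / of_nat k) * adams k (adams_sum y))"
    by (simp add: Abs_sf_susp_Lie pleth_graded_sum[OF terms] pleth_const_mult
        pleth_fps_subst[OF Z] vanishes_below_1_power_sum pleth_power_sum[OF _ Z] cong: graded_sum_cong)
  thus ?thesis by (simp add: sum_moebius_adams_sum[OF y])
qed

lemma fps_X_over_1_plus_X:
  "Abs_fps (\<lambda>n. if n = 0 then 0 else (-1) ^ (n - 1)) * (1 + fps_X) = (fps_X :: rat fps)"
proof (rule fps_ext)
  fix n :: nat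
  let ?A = "Abs_fps (\<lambda>n. if n = 0 then 0 else (-1) ^ (n - 1)) :: rat fps"
  have "(?A * (1 + fps_X)) $ n = ?A $ n + (?A * fps_X) $ n" by (simp add: distrib_left)
  also have "\<dots> = fps_X $ n"
  proof (cases n)
    case (Suc m) thus ?thesis by (cases m) auto
  qed simp
  finally show "(?A * (1 + fps_X)) $ n = fps_X $ n" .
qed

lemmas Abs_sf_simps = Abs_sf_sf_add Abs_sf_sf_sub Abs_sf_sf_mult Abs_sf_sf_one Abs_sf_sf_comp
  Abs_sf_dp1 power_sum_def[symmetric]

text \<open>With Z = Comm o y the equation reads HALpa = p_1 Z / (1 + Z), that is y (1 + Z) = p_1.\<close>

lemma HALpa_fixpoint:
  assumes "HALpa = sf_mult (pvar 1) (sf_comp p1_over_1_plus_p1 (sf_comp Comm (sf_sub (pvar 1) HALpa)))"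
  defines "y \<equiv> power_sum 1 - Abs_sf HALpa"
  shows "vanishes_below 1 y" and "y * pleth_exp y = power_sum 1"
proof -
  let ?A = "Abs_fps (\<lambda>n. if n = 0 then 0 else (-1) ^ (n - 1)) :: rat fps"
  define p where "p = power_sum 1"
  define h where "h = Abs_sf HALpa"
  have h: "h = p * pleth (Abs_sf p1_over_1_plus_p1) (pleth (Abs_sf Comm) y)"
    using arg_cong[OF assms(1), of Abs_sf] by (simp only: Abs_sf_simps h_def p_def y_def)
  have p: "vanishes_below 1 p" by (simp add: p_def vanishes_below_1_power_sum)
  have "vanishes_below 1 h" by (subst h) (simp add: p vanishes_below_mult_left)
  thus y: "vanishes_below 1 y" using p by (simp add: y_def p_def h_def vanishes_below_diff)
  define z where "z = pleth_exp y - 1"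
  have z: "vanishes_below 1 z" by (simp add: z_def vanishes_below_1_pleth_exp_minus_1)
  have hA: "h = p * fps_subst ?A z"
    using h y by (simp add: p_def z_def pleth_Comm p1_over_1_plus_p1_def Abs_sf_psubst
        power_sum_def[symmetric] pleth_fps_subst vanishes_below_1_pleth_exp_minus_1
        vanishes_below_1_power_sum pleth_power_sum)
  have A: "fps_subst ?A z * (1 + z) = z"
  proof -
    have "1 + z = fps_subst (1 + fps_X) z" by (simp add: fps_subst_add fps_subst_one fps_subst_X[OF z])
    thus ?thesis by (simp add: fps_subst_mult[OF z, symmetric] fps_X_over_1_plus_X fps_subst_X[OF z])
  qed
  have "y * (1 + z) = p * (1 + z) - p * (fps_subst ?A z * (1 + z))"
    unfolding y_def h_def[symmetric] p_def[symmetric] hA by (simp add: algebra_simps)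
  also have "\<dots> = p" unfolding A by (simp add: algebra_simps)
  finally show "y * pleth_exp y = power_sum 1" by (simp add: p_def z_def)
qed

text \<open>The sign twist turns x = p_1 exp (adams_sum x) into q = p_1 exp (- adams_sum q) for
  q = - negate_vars x.\<close>

lemma susp_PreLie_fixpoint:
  assumes x0: "vanishes_below 1 x" and x: "x = power_sum 1 * (1 + pleth (Abs_sf Comm) x)"
  shows "vanishes_below 1 (- negate_vars x)"
    and "- negate_vars x * pleth_exp (- negate_vars x) = power_sum 1"
proof -
  show "vanishes_below 1 (- negate_vars x)" using x0 by (simp add: vanishes_below_negate_vars)
  have "x = power_sum 1 * pleth_exp x" using x by (simp add: pleth_Comm[OF x0])
  hence "negate_vars x = - power_sum 1 * pleth_exp (negate_vars x)"
    by (metis negate_vars_mult negate_vars_power_sum negate_vars_pleth_exp)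
  hence "- negate_vars x * pleth_exp (- negate_vars x) =
           power_sum 1 * (pleth_exp (negate_vars x) * pleth_exp (- negate_vars x))"
    by (metis minus_mult_left minus_minus mult.assoc)
  thus "- negate_vars x * pleth_exp (- negate_vars x) = power_sum 1"
    by (simp add: mult.commute[of "pleth_exp (negate_vars x)"] pleth_exp_uminus)
qed

lemma HAL_identity:
  assumes y: "vanishes_below 1 y" and ey: "y * pleth_exp y = power_sum 1"
  defines "h \<equiv> power_sum 1 * y + pleth_exp y - 1 - power_sum 1"
  shows "power_sum 1 - (power_sum 1 * deriv_p1 h - h) = pleth_exp y - 1"
proof -
  have "deriv_p1 h = y + (power_sum 1 + pleth_exp y) * deriv_p1 y - 1"
    by (simp add: h_def deriv_p1_add deriv_p1_diff deriv_p1_mult deriv_p1_one deriv_p1_power_sum_1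
        deriv_p1_pleth_exp[OF y] algebra_simps)
  also have "\<dots> = y" by (simp add: deriv_p1_fixpoint[OF y ey])
  finally show ?thesis by (simp add: h_def algebra_simps)
qed

lemma Abs_sf_susp_PreLie:
  assumes prelie0: "PreLie {#} = 0"
    and prelie: "PreLie = sf_mult (pvar 1) (sf_add sf_one (sf_comp Comm PreLie))"
    and y: "vanishes_below 1 y" "y * pleth_exp y = power_sum 1"
  shows "Abs_sf (susp PreLie) = y"
proof -
  have "vanishes_below 1 (Abs_sf PreLie)" using prelie0 by (simp add: vanishes_below_1_iff)
  moreover have "Abs_sf PreLie = power_sum 1 * (1 + pleth (Abs_sf Comm) (Abs_sf PreLie))"
    using arg_cong[OF prelie, of Abs_sf] by (simp only: Abs_sf_simps)
  ultimately have "vanishes_below 1 (- negate_vars (Abs_sf PreLie))"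
    "- negate_vars (Abs_sf PreLie) * pleth_exp (- negate_vars (Abs_sf PreLie)) = power_sum 1"
    by (rule susp_PreLie_fixpoint)+
  thus ?thesis unfolding Abs_sf_susp by (rule pleth_exp_fixpoint_unique[OF _ y(1) _ y(2)])
qed

lemma Abs_sf_HAL:
  assumes y: "vanishes_below 1 (power_sum 1 - Abs_sf HALpa)" (is "vanishes_below 1 ?y")
    and halp: "HALp = sf_mult (pvar 1) (sf_comp (susp Lie) (sf_comp Comm (sf_sub (pvar 1) HALpa)))"
    and hala: "HALa = sf_comp (sf_sub Comm (pvar 1)) (sf_sub (pvar 1) HALpa)"
    and hal: "HAL = sf_sub (sf_add HALp HALa) HALpa"
  shows "Abs_sf HAL = power_sum 1 * ?y + pleth_exp ?y - 1 - power_sum 1"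
proof -
  have "Abs_sf HALp = power_sum 1 * ?y"
    using arg_cong[OF halp, of Abs_sf]
    by (simp add: Abs_sf_simps pleth_Comm[OF y] pleth_susp_Lie_Comm[OF y])
  moreover have "Abs_sf HALa = pleth_exp ?y - 1 - ?y"
    using arg_cong[OF hala, of Abs_sf]
    by (simp add: Abs_sf_simps pleth_diff pleth_Comm[OF y] pleth_power_sum[OF _ y])
  ultimately have "Abs_sf HAL = power_sum 1 * ?y + (pleth_exp ?y - 1 - ?y) - Abs_sf HALpa"
    using arg_cong[OF hal, of Abs_sf] by (simp only: Abs_sf_simps)
  thus ?thesis by (simp add: algebra_simps)
qed

theorem mainTheorem8:
  fixes PreLie HALpa HALp HALa HAL :: sf
  assumes prelie0: "PreLie {#} = 0"
    and prelie: "PreLie = sf_mult (pvar 1) (sf_add sf_one (sf_comp Comm PreLie))"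
    and halpa: "HALpa = sf_mult (pvar 1)
                  (sf_comp p1_over_1_plus_p1 (sf_comp Comm (sf_sub (pvar 1) HALpa)))"
    and halp: "HALp = sf_mult (pvar 1)
                  (sf_comp (susp Lie) (sf_comp Comm (sf_sub (pvar 1) HALpa)))"
    and hala: "HALa = sf_comp (sf_sub Comm (pvar 1)) (sf_sub (pvar 1) HALpa)"
    and hal: "HAL = sf_sub (sf_add HALp HALa) HALpa"
  shows "sf_comp Comm (susp PreLie) =
           sf_sub (pvar 1) (sf_sub (sf_mult (pvar 1) (dp1 HAL)) HAL)"
proof -
  define Y where "Y = power_sum 1 - Abs_sf HALpa"
  have Y: "vanishes_below 1 Y" "Y * pleth_exp Y = power_sum 1"
    using HALpa_fixpoint[OF halpa] by (simp_all add: Y_def)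
  have "Abs_sf (sf_comp Comm (susp PreLie)) = pleth_exp Y - 1"
    by (simp add: Abs_sf_sf_comp Abs_sf_susp_PreLie[OF prelie0 prelie Y] pleth_Comm[OF Y(1)])
  moreover have "Abs_sf HAL = power_sum 1 * Y + pleth_exp Y - 1 - power_sum 1"
    using Abs_sf_HAL[OF _ halp hala hal] Y(1) by (simp add: Y_def)
  hence "Abs_sf (sf_sub (pvar 1) (sf_sub (sf_mult (pvar 1) (dp1 HAL)) HAL)) = pleth_exp Y - 1"
    using HAL_identity[OF Y] by (simp add: Abs_sf_simps)
  ultimately show ?thesis by (metis Abs_sf_inject UNIV_I)
qed

end
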